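(* Let $\rho>0$ and $y\in\mathbb{R}^n$. There exists a neighborhood $\mathcal Y$ of $y$ such that for all $u\in\mathcal Y$: \[ \mathcal K_{\mathcal D}(P_yu-\rho w)\subseteq\mathcal K_{\mathcal D}(P_yy-\rho w),\quad \mathcal Q_{\mathcal D}(P_yu-\rho w)\subseteq\mathcal Q_{\mathcal D}(P_yy-\rho w),\quad \mathcal Q_{S_\rho}(u)\subseteq\mathcal Q_{S_\rho}(y), \] and \[ \Pi_{\mathcal D}(P_yu-\rho w)=\Pi_{\mathcal D}(P_yy-\rho w)+\widehat Q P_y(u-y)\ \ \forall \widehat Q\in\mathcal Q_{\mathcal D}(P_yu-\rho w), \qquad S_\rho(u)=S_\rho(y)+Q(u-y)\ \ \forall Q\in\mathcal Q_{S_\rho}(u). \]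
   Context: $w\in\mathbb{R}^n$, $w_k=n-2k+1$. $\mathcal D:=\{x\in\mathbb{R}^n: x_1\ge\cdots\ge x_n\}$, $\Pi_{\mathcal D}$ the Euclidean projection onto $\mathcal D$. $B\in\mathbb{R}^{(n-1)\times n}$ with $Bx=(x_1-x_2,\dots,x_{n-1}-x_n)^T$; $B_i$ its $i$-th row and $B_K$ the rows indexed by $K$. $S_\rho(y):=\operatorname{argmin}_x\{\tfrac12\|x-y\|^2+\rho\sum_{i<j}|x_i-x_j|\}$. For each $y\in\mathbb{R}^n$, $P_y$ is a fixed permutation matrix such that $P_yy$ has non-increasing components. For $v\in\mathbb{R}^n$: $\mathcal M_{\mathcal D}(v)$ is the set of $\lambda\in\mathbb{R}^{n-1}$ with $\Pi_{\mathcal D}(v)-v+B^T\lambda=0$, $B\Pi_{\mathcal D}(v)\ge0$, $\lambda\le0$, $\lambda^TB\Pi_{\mathcal D}(v)=0$; $\mathcal I_{\mathcal D}(v):=\{i\in\{1,\dots,n-1\}: B_i\Pi_{\mathcal D}(v)=0\}$; $\mathcal K_{\mathcal D}(v):=\{K\subseteq\{1,\dots,n-1\}: \exists\lambda\in\mathcal M_{\mathcal D}(v)\text{ with }\mathrm{supp}(\lambda)\subseteq K\subseteq\mathcal I_{\mathcal D}(v),\ B_K\text{ has full row rank}\}$; $\mathcal Q_{\mathcal D}(v):=\{I_n-B_K^T(B_KB_K^T)^{-1}B_K: K\in\mathcal K_{\mathcal D}(v)\}$. Finally $\mathcal Q_{S_\rho}(y):=\{P_y^T\widehat QP_y:\widehat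 Q\in\mathcal Q_{\mathcal D}(P_yy-\rho w)\}$. *)

theory Defs
  imports "Jordan_Normal_Form.DL_Rank" "Jordan_Normal_Form.DL_Submatrix"
    "Jordan_Normal_Form.Gauss_Jordan_Elimination"
begin

text \<open>Vectors in R^n are JNF vectors in carrier_vec n, indexed 0..n-1
  (paper index k corresponds to index k-1 here).\<close>

definition vnorm :: "real vec \<Rightarrow> real" where
  "vnorm v = sqrt (v \<bullet> v)"

definition Dset :: "nat \<Rightarrow> real vec set" where
  "Dset n = {x \<in> carrier_vec n. \<forall>i. i + 1 < n \<longrightarrow> x $ (i + 1) \<le> x $ i}"

definition projD :: "nat \<Rightarrow> real vec \<Rightarrow> real vec" where
  "projD n v = (THE x. x \<in> Dset n \<and> (\<forall>z \<in> Dset n. vnorm (x - v) \<le> vnorm (z - v)))"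

text \<open>w_k = n - 2k + 1 for k = 1..n, i.e. w_i = n - 2i - 1 for 0-based i.\<close>
definition wvec :: "nat \<Rightarrow> real vec" where
  "wvec n = vec n (\<lambda>i. real n - 2 * real i - 1)"

definition Bmat :: "nat \<Rightarrow> real mat" where
  "Bmat n = mat (n - 1) n (\<lambda>(i, j). if j = i then 1 else if j = i + 1 then -1 else 0)"

definition BK :: "nat \<Rightarrow> nat set \<Rightarrow> real mat" where
  "BK n K = submatrix (Bmat n) K UNIV"

definition full_row_rank :: "real mat \<Rightarrow> bool" where
  "full_row_rank A \<longleftrightarrow> vec_space.rank (dim_row A) (A :: real mat) = dim_row A"

definition Sobj :: "nat \<Rightarrow> real \<Rightarrow> real vec \<Rightarrow> real vec \<Rightarrow> real" where
  "Sobj n \<rho> y x = (vnorm (x - y))\<^sup>2 / 2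
     + \<rho> * (\<Sum>j<n. \<Sum>i<j. \<bar>x $ i - x $ j\<bar>)"

definition Srho :: "nat \<Rightarrow> real \<Rightarrow> real vec \<Rightarrow> real vec" where
  "Srho n \<rho> y = (THE x. x \<in> carrier_vec n \<and> (\<forall>z \<in> carrier_vec n. Sobj n \<rho> y x \<le> Sobj n \<rho> y z))"

definition perm_matrix :: "nat \<Rightarrow> real mat \<Rightarrow> bool" where
  "perm_matrix n P \<longleftrightarrow>
     (\<exists>\<sigma>. \<sigma> permutes {..<n} \<and> P = mat n n (\<lambda>(i, j). if \<sigma> i = j then 1 else 0))"

definition MD :: "nat \<Rightarrow> real vec \<Rightarrow> real vec set" where
  "MD n v = {lam \<in> carrier_vec (n - 1).
      projD n v - v + (transpose_mat (Bmat n) *\<^sub>v lam) = 0\<^sub>v n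
    \<and> (\<forall>i < n - 1. (Bmat n *\<^sub>v projD n v) $ i \<ge> 0)
    \<and> (\<forall>i < n - 1. lam $ i \<le> 0)
    \<and> lam \<bullet> (Bmat n *\<^sub>v projD n v) = 0}"

definition ID :: "nat \<Rightarrow> real vec \<Rightarrow> nat set" where
  "ID n v = {i. i < n - 1 \<and> (Bmat n *\<^sub>v projD n v) $ i = 0}"

definition vsupp :: "real vec \<Rightarrow> nat set" where
  "vsupp lam = {i. i < dim_vec lam \<and> lam $ i \<noteq> 0}"

definition KD :: "nat \<Rightarrow> real vec \<Rightarrow> nat set set" where
  "KD n v = {K. (\<exists>lam \<in> MD n v. vsupp lam \<subseteq> K) \<and> K \<subseteq> ID n v \<and> full_row_rank (BK n K)}"

definition QD :: "nat \<Rightarrow> real vec \<Rightarrow> real mat set" where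
  "QD n v = {1\<^sub>m n - transpose_mat (BK n K) * the (mat_inverse (BK n K * transpose_mat (BK n K))) * BK n K
             | K. K \<in> KD n v}"

text \<open>P is the fixed choice y |-> P_y of sorting permutation matrices.\<close>
definition QS :: "nat \<Rightarrow> real \<Rightarrow> (real vec \<Rightarrow> real mat) \<Rightarrow> real vec \<Rightarrow> real mat set" where
  "QS n \<rho> P y = {transpose_mat (P y) * Qh * P y | Qh. Qh \<in> QD n (P y *\<^sub>v y - \<rho> \<cdot>\<^sub>v wvec n)}"

end

theory Submission
  imports Defs
begin

text \<open>The projection \<open>x = \<Pi>\<^sub>D(v)\<close> is characterised by prefix sums: \<open>x\<close> is non-increasing, the
  partial sums of \<open>v - x\<close> are \<open>\<le> 0\<close>, the full sum vanishes, and so does every partial sum ending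
  where \<open>x\<close> strictly decreases. These partial sums form the unique multiplier \<open>\<lambda>\<close> of
  \<open>\<M>\<^sub>D(v)\<close>. Since \<open>\<Pi>\<^sub>D\<close> is nonexpansive, strict decreases of \<open>\<Pi>\<^sub>D(v)\<close> and nonzero entries of
  \<open>\<lambda>\<close> persist near \<open>v\<close>, which gives \<open>\<K>\<^sub>D(v') \<subseteq> \<K>\<^sub>D(v)\<close>; and for \<open>K \<in> \<K>\<^sub>D(v')\<close> the
  difference \<open>\<Pi>\<^sub>D(v') - \<Pi>\<^sub>D(v)\<close> lies in \<open>ker B\<^sub>K\<close> while \<open>v' - v\<close> differs from it by an element of
  \<open>range B\<^sub>K\<^sup>T\<close>, so \<open>Q\<^sub>K\<close> maps the latter to the former.

  For \<open>S\<^sub>\<rho>\<close>, the penalty equals \<open>\<rho> \<langle>w, x\<rangle>\<close> on sorted vectors, and by the rearrangement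
  inequality \<open>S\<^sub>\<rho>(y) = P\<^sup>T \<Pi>\<^sub>D(P y - \<rho> w)\<close> for every sorting permutation \<open>P\<close> of \<open>y\<close>. Near \<open>y\<close>, a
  permutation sorting \<open>u\<close> also sorts \<open>y\<close>; two such permutations differ only within ties of \<open>y\<close>,
  and each tie carries a nonzero multiplier (the entries of \<open>w\<close> strictly decrease), hence lies in
  every \<open>K\<close>, so conjugating \<open>Q\<^sub>K\<close> by either permutation gives the same matrix.\<close>

section \<open>Projection onto the monotone cone\<close>

lemma sum_lessThan_add:
  fixes f :: "nat \<Rightarrow> real"
  shows "(\<Sum>j<a+b. f j) = (\<Sum>j<a. f j) + (\<Sum>j<b. f (j + a))"
  by (induction b) (auto simp: add.commute)

lemma summation_by_parts:
  fixes a d :: "nat \<Rightarrow> real"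
  shows "(\<Sum>i<Suc n. a i * d i)
    = (\<Sum>k<n. (\<Sum>j<Suc k. d j) * (a k - a (Suc k))) + (\<Sum>j<Suc n. d j) * a n"
  by (induction n) (simp_all add: algebra_simps)

lemma antimono_upto_le:
  fixes f :: "nat \<Rightarrow> real"
  assumes "\<forall>i. Suc i < n \<longrightarrow> f (Suc i) \<le> f i" and "i \<le> j" and "j < n"
  shows "f j \<le> f i"
  using assms(2,3)
proof (induction j)
  case (Suc j)
  then show ?case using assms(1) by (cases "i = Suc j") force+
qed simp

text \<open>Optimality conditions for projecting \<open>v\<close> onto non-increasing sequences of length \<open>n\<close>;
  the prefix sums of \<open>v - x\<close> are the multipliers of the constraints \<open>x (Suc k) \<le> x k\<close>.\<close>
definition isotonic_kkt :: "nat \<Rightarrow> (nat \<Rightarrow> real) \<Rightarrow> (nat \<Rightarrow> real) \<Rightarrow> bool" where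
  "isotonic_kkt n v x \<longleftrightarrow> (\<forall>i. Suc i < n \<longrightarrow> x (Suc i) \<le> x i)
     \<and> (\<forall>k<n. (\<Sum>j<Suc k. v j - x j) \<le> 0) \<and> (\<Sum>j<n. v j - x j) = 0
     \<and> (\<forall>k. Suc k < n \<longrightarrow> x (Suc k) < x k \<longrightarrow> (\<Sum>j<Suc k. v j - x j) = 0)"

lemma prefix_sum_after_block:
  fixes v x' :: "nat \<Rightarrow> real"
  assumes "(\<Sum>j<k0. v j) = real k0 * M" and "k0 \<le> k"
  shows "(\<Sum>j<Suc k. v j - (if j < k0 then M else x' (j - k0))) = (\<Sum>j<Suc (k - k0). v (j + k0) - x' j)"
proof -
  let ?x = "\<lambda>j. if j < k0 then M else x' (j - k0)"
  have "(\<Sum>j<Suc k. v j - ?x j)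
      = (\<Sum>j<k0. v j - ?x j) + (\<Sum>j<Suc (k - k0). v (j + k0) - ?x (j + k0))"
    using sum_lessThan_add[of "\<lambda>j. v j - ?x j" k0 "Suc (k - k0)"] assms(2)
    by (simp add: Suc_diff_le)
  also have "(\<Sum>j<k0. v j - ?x j) = 0"
    using assms(1) by (simp add: sum_subtractf)
  finally show ?thesis by simp
qed

lemma isotonic_kkt_append:
  fixes v x' :: "nat \<Rightarrow> real" and M :: real
  assumes k0: "0 < k0"
    and prefix_le: "\<forall>k\<in>{1..k0}. (\<Sum>j<k. v j) \<le> real k * M"
    and prefix_eq: "(\<Sum>j<k0. v j) = real k0 * M"
    and tail: "isotonic_kkt m (\<lambda>j. v (j + k0)) x'"
    and head: "0 < m \<Longrightarrow> x' 0 \<le> M"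
  shows "isotonic_kkt (k0 + m) v (\<lambda>j. if j < k0 then M else x' (j - k0))"
    (is "isotonic_kkt _ _ ?x")
proof -
  have const_sum: "(\<Sum>j<k. v j - M) = (\<Sum>j<k. v j) - real k * M" for k
    by (simp add: sum_subtractf)
  note tail_sum = prefix_sum_after_block[OF prefix_eq, where x' = x']
  show ?thesis
    unfolding isotonic_kkt_def
  proof (intro conjI allI impI)
    fix i assume i: "Suc i < k0 + m"
    show "?x (Suc i) \<le> ?x i"
    proof -
      consider "Suc i < k0" | "Suc i = k0" | "k0 \<le> i" by linarith
      then show ?thesis
        using head tail i unfolding isotonic_kkt_def by cases (auto simp: Suc_diff_le)
    qed
  next
    fix k assume k: "k < k0 + m"
    show "(\<Sum>j<Suc k. v j - ?x j) \<le> 0"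
    proof (cases "k < k0")
      case True
      then have "Suc k \<in> {1..k0}" by simp
      then have "(\<Sum>j<Suc k. v j) \<le> real (Suc k) * M" using prefix_le by blast
      moreover have "(\<Sum>j<Suc k. v j - ?x j) = (\<Sum>j<Suc k. v j - M)"
        using True by (intro sum.cong) auto
      ultimately show ?thesis unfolding const_sum by linarith
    next
      case False
      then have "k0 \<le> k" "k - k0 < m" using k by auto
      moreover have "(\<Sum>j<Suc (k - k0). v (j + k0) - x' j) \<le> 0"
        using tail \<open>k - k0 < m\<close> unfolding isotonic_kkt_def by blast
      ultimately show ?thesis using tail_sum[of k] by linarith
    qed
  next
    show "(\<Sum>j<k0 + m. v j - ?x j) = 0"
    proof (cases m)
      case 0
      then show ?thesis using const_sum[of k0] prefix_eq by simp
    next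
      case (Suc m')
      then show ?thesis
        using tail_sum[of "k0 + m'"] tail unfolding isotonic_kkt_def by simp
    qed
  next
    fix k assume k: "Suc k < k0 + m" and lt: "?x (Suc k) < ?x k"
    consider "Suc k < k0" | "Suc k = k0" | "k0 \<le> k" by linarith
    then show "(\<Sum>j<Suc k. v j - ?x j) = 0"
    proof cases
      case 2
      then show ?thesis using const_sum[of k0] prefix_eq by simp
    next
      case 3
      then have "Suc (k - k0) < m" "x' (Suc (k - k0)) < x' (k - k0)"
        using k lt by (auto simp: Suc_diff_le)
      then show ?thesis using tail_sum[OF 3] tail unfolding isotonic_kkt_def by simp
    qed (use lt in simp)
  qed
qed

text \<open>Pool adjacent violators: the first block is a prefix of maximal average \<open>M\<close>,
  followed recursively by a solution for the remaining entries. The bound on \<open>x 0\<close> is the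
  strengthening that makes the induction go through (it ensures that the blocks decrease).\<close>
lemma isotonic_kkt_exists:
  fixes v :: "nat \<Rightarrow> real"
  assumes "0 < n"
  shows "\<exists>x. isotonic_kkt n v x \<and> (\<forall>c. (\<forall>k\<in>{1..n}. (\<Sum>j<k. v j) \<le> real k * c) \<longrightarrow> x 0 \<le> c)"
  using assms
proof (induction n arbitrary: v rule: less_induct)
  case (less n)
  define avg where "avg = (\<lambda>k. (\<Sum>j<k. v j) / real k)"
  define M where "M = Max (avg ` {1..n})"
  have fin: "finite (avg ` {1..n})" and ne: "avg ` {1..n} \<noteq> {}" using less.prems by auto
  obtain k0 where k0: "k0 \<in> {1..n}" "avg k0 = M"
    using Max_in[OF fin ne] unfolding M_def by auto
  have prefix_le: "(\<Sum>j<k. v j) \<le> real k * M" if "k \<in> {1..n}" for k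
  proof -
    have "avg k \<le> M" unfolding M_def using fin that by auto
    then show ?thesis using that unfolding avg_def by (simp add: divide_le_eq mult.commute)
  qed
  have prefix_eq: "(\<Sum>j<k0. v j) = real k0 * M" using k0 unfolding avg_def by auto
  define m where "m = n - k0"
  obtain x' where x': "isotonic_kkt m (\<lambda>j. v (j + k0)) x'" and head: "0 < m \<Longrightarrow> x' 0 \<le> M"
  proof (cases "m = 0")
    case True
    then show ?thesis using that[of "\<lambda>_. M"] by (simp add: isotonic_kkt_def)
  next
    case False
    then have "m < n" "0 < m" using k0 unfolding m_def by auto
    then obtain x' where x': "isotonic_kkt m (\<lambda>j. v (j + k0)) x'"
      and bound: "\<forall>c. (\<forall>k\<in>{1..m}. (\<Sum>j<k. v (j + k0)) \<le> real k * c) \<longrightarrow> x' 0 \<le> c"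
      using less.IH[of m "\<lambda>j. v (j + k0)"] by blast
    have "(\<Sum>j<k. v (j + k0)) \<le> real k * M" if "k \<in> {1..m}" for k
    proof -
      have "k0 + k \<in> {1..n}" using that k0 unfolding m_def by auto
      then show ?thesis using prefix_le[of "k0 + k"] prefix_eq sum_lessThan_add[of v k0 k]
        by (simp add: algebra_simps)
    qed
    then show ?thesis using that x' bound by blast
  qed
  have "isotonic_kkt (k0 + m) v (\<lambda>j. if j < k0 then M else x' (j - k0))"
    using k0 prefix_le prefix_eq x' head by (intro isotonic_kkt_append) auto
  moreover have "M \<le> c" if "\<forall>k\<in>{1..n}. (\<Sum>j<k. v j) \<le> real k * c" for c
  proof -
    have "real k0 * M \<le> real k0 * c" using bspec[OF that k0(1)] prefix_eq by simp
    then show ?thesis using k0(1) by auto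
  qed
  ultimately show ?case
    using k0 unfolding m_def by (intro exI[of _ "\<lambda>j. if j < k0 then M else x' (j - k0)"]) auto
qed

lemma isotonic_kkt_cong:
  assumes "\<And>i. i < n \<Longrightarrow> v i = v' i" and "\<And>i. i < n \<Longrightarrow> x i = x' i"
  shows "isotonic_kkt n v x = isotonic_kkt n v' x'"
proof -
  have "(\<Sum>j<Suc k. v j - x j) = (\<Sum>j<Suc k. v' j - x' j)" if "k < n" for k
    using that assms by (intro sum.cong) auto
  moreover have "(\<Sum>j<n. v j - x j) = (\<Sum>j<n. v' j - x' j)"
    using assms by (intro sum.cong) auto
  ultimately show ?thesis
    using assms unfolding isotonic_kkt_def by (auto simp del: sum.lessThan_Suc)
qed

lemma Dset_carrier: "x \<in> Dset n \<Longrightarrow> x \<in> carrier_vec n"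
  unfolding Dset_def by auto

lemma Dset_antimono: "x \<in> Dset n \<Longrightarrow> Suc i < n \<Longrightarrow> x $ Suc i \<le> x $ i"
  unfolding Dset_def by auto

lemma Dset_iff: "x \<in> Dset n \<longleftrightarrow> x \<in> carrier_vec n \<and> (\<forall>i. Suc i < n \<longrightarrow> x $ Suc i \<le> x $ i)"
  unfolding Dset_def by simp

definition kkt_Dset :: "nat \<Rightarrow> real vec \<Rightarrow> real vec \<Rightarrow> bool" where
  "kkt_Dset n v x \<longleftrightarrow> x \<in> carrier_vec n \<and> isotonic_kkt n (\<lambda>j. v $ j) (\<lambda>j. x $ j)"

lemma kkt_Dset_in_Dset: "kkt_Dset n v x \<Longrightarrow> x \<in> Dset n"
  unfolding kkt_Dset_def isotonic_kkt_def Dset_iff by simp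

lemma kkt_Dset_exists:
  assumes "v \<in> carrier_vec n"
  shows "\<exists>x. kkt_Dset n v x"
proof (cases "n = 0")
  case True
  then show ?thesis using assms by (intro exI[of _ v]) (simp add: kkt_Dset_def isotonic_kkt_def)
next
  case False
  then obtain x where "isotonic_kkt n (\<lambda>j. v $ j) x"
    using isotonic_kkt_exists[of n "\<lambda>j. v $ j"] by blast
  moreover have "isotonic_kkt n (\<lambda>j. v $ j) (\<lambda>j. vec n x $ j) = isotonic_kkt n (\<lambda>j. v $ j) x"
    by (rule isotonic_kkt_cong) auto
  ultimately show ?thesis unfolding kkt_Dset_def by (intro exI[of _ "vec n x"]) simp
qed

lemma kkt_Dset_variational_ineq:
  assumes kkt: "kkt_Dset n v x" and z: "z \<in> Dset n"
  shows "(\<Sum>i<n. (z$i - x$i) * (v$i - x$i)) \<le> 0"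
proof (cases n)
  case (Suc m)
  let ?a = "\<lambda>i. z$i - x$i" and ?d = "\<lambda>i. v$i - x$i"
  have x: "isotonic_kkt n (\<lambda>j. v $ j) (\<lambda>j. x $ j)" using kkt unfolding kkt_Dset_def by (rule conjunct2)
  have "(\<Sum>i<Suc m. ?a i * ?d i)
      = (\<Sum>k<m. (\<Sum>j<Suc k. ?d j) * (?a k - ?a (Suc k))) + (\<Sum>j<Suc m. ?d j) * ?a m"
    by (rule summation_by_parts)
  also have "(\<Sum>j<Suc m. ?d j) = 0" using x Suc unfolding isotonic_kkt_def by simp
  also have "(\<Sum>k<m. (\<Sum>j<Suc k. ?d j) * (?a k - ?a (Suc k))) \<le> 0"
  proof (rule sum_nonpos)
    fix k assume "k \<in> {..<m}"
    then have k: "Suc k < n" using Suc by simp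
    define S where "S = (\<Sum>j<Suc k. ?d j)"
    have "S \<le> 0" using x k unfolding isotonic_kkt_def S_def by simp
    then have "S * (z$k - z$Suc k) \<le> 0"
      using Dset_antimono[OF z k] by (simp add: mult_nonpos_nonneg)
    moreover have "S * (x$k - x$Suc k) = 0"
      using x k unfolding isotonic_kkt_def S_def by (cases "x $ Suc k < x $ k") auto
    moreover have "S * (?a k - ?a (Suc k)) = S * (z$k - z$Suc k) - S * (x$k - x$Suc k)"
      by (simp add: algebra_simps)
    ultimately have "S * (?a k - ?a (Suc k)) \<le> 0" by linarith
    then show "(\<Sum>j<Suc k. ?d j) * (?a k - ?a (Suc k)) \<le> 0" unfolding S_def .
  qed
  finally show ?thesis using Suc by simp
qed simp

lemma kkt_Dset_pythagoras:
  assumes "kkt_Dset n v x" and "z \<in> Dset n"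
  shows "(\<Sum>i<n. (x$i - v$i)^2) + (\<Sum>i<n. (z$i - x$i)^2) \<le> (\<Sum>i<n. (z$i - v$i)^2)"
proof -
  have expand: "(z$i - v$i)^2 = (z$i - x$i)^2 + (x$i - v$i)^2 - 2 * ((z$i - x$i) * (v$i - x$i))" for i
    by (simp add: power2_eq_square algebra_simps)
  have "(\<Sum>i<n. (z$i - v$i)^2)
      = (\<Sum>i<n. (z$i - x$i)^2) + (\<Sum>i<n. (x$i - v$i)^2) - 2 * (\<Sum>i<n. (z$i - x$i) * (v$i - x$i))"
    unfolding expand by (simp add: sum.distrib sum_subtractf sum_distrib_left)
  then show ?thesis using kkt_Dset_variational_ineq[OF assms] by simp
qed

lemma vnorm_eq_sqrt_sum: "a \<in> carrier_vec n \<Longrightarrow> vnorm a = sqrt (\<Sum>i<n. (a$i)^2)"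
  unfolding vnorm_def scalar_prod_def by (simp add: atLeast0LessThan power2_eq_square)

lemma vnorm_minus_eq_sqrt_sum:
  assumes "a \<in> carrier_vec n" and "b \<in> carrier_vec n"
  shows "vnorm (a - b) = sqrt (\<Sum>i<n. (a$i - b$i)^2)"
proof -
  have "(\<Sum>i<n. ((a - b)$i)^2) = (\<Sum>i<n. (a$i - b$i)^2)" using assms by (intro sum.cong) auto
  then show ?thesis using assms vnorm_eq_sqrt_sum[of "a - b" n] by simp
qed

lemma vnorm_le_iff_sum_le:
  assumes "a \<in> carrier_vec n" "b \<in> carrier_vec n" "c \<in> carrier_vec n" "d \<in> carrier_vec n"
  shows "vnorm (a - b) \<le> vnorm (c - d) \<longleftrightarrow> (\<Sum>i<n. (a$i - b$i)^2) \<le> (\<Sum>i<n. (c$i - d$i)^2)"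
  using assms by (simp add: vnorm_minus_eq_sqrt_sum)

lemma abs_nth_le_vnorm:
  assumes "a \<in> carrier_vec n" and "i < n"
  shows "\<bar>a$i\<bar> \<le> vnorm a"
proof -
  have "(a$i)^2 \<le> (\<Sum>j<n. (a$j)^2)" using assms(2) by (intro member_le_sum) auto
  then have "sqrt ((a$i)^2) \<le> sqrt (\<Sum>j<n. (a$j)^2)" by (rule real_sqrt_le_mono)
  then show ?thesis using vnorm_eq_sqrt_sum[OF assms(1)] by simp
qed

lemma sum_power2_le_0_imp_eq_0:
  fixes f :: "nat \<Rightarrow> real"
  assumes "(\<Sum>i<n. (f i)^2) \<le> 0" and "i < n"
  shows "f i = 0"
proof -
  have "(\<Sum>i<n. (f i)^2) = 0" using assms(1) sum_nonneg[of "{..<n}" "\<lambda>i. (f i)^2"] by simp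
  then have "\<forall>i\<in>{..<n}. (f i)^2 = 0" by (subst (asm) sum_nonneg_eq_0_iff) auto
  then show ?thesis using assms(2) by auto
qed

lemma projD_eq_if_kkt_Dset:
  assumes kkt: "kkt_Dset n v x" and v: "v \<in> carrier_vec n"
  shows "projD n v = x"
  unfolding projD_def
proof (rule the_equality)
  have xD: "x \<in> Dset n" using kkt_Dset_in_Dset[OF kkt] .
  have sum_le: "(\<Sum>i<n. (x$i - v$i)^2) + (\<Sum>i<n. (z$i - x$i)^2) \<le> (\<Sum>i<n. (z$i - v$i)^2)"
    if "z \<in> Dset n" for z
    using kkt_Dset_pythagoras[OF kkt that] .
  show "x \<in> Dset n \<and> (\<forall>z\<in>Dset n. vnorm (x - v) \<le> vnorm (z - v))"
  proof (intro conjI ballI xD)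
    fix z assume z: "z \<in> Dset n"
    have "0 \<le> (\<Sum>i<n. (z$i - x$i)^2)" by (rule sum_nonneg) simp
    then have "(\<Sum>i<n. (x$i - v$i)^2) \<le> (\<Sum>i<n. (z$i - v$i)^2)" using sum_le[OF z] by linarith
    then show "vnorm (x - v) \<le> vnorm (z - v)"
      using vnorm_le_iff_sum_le[OF Dset_carrier[OF xD] v Dset_carrier[OF z] v] by blast
  qed
  fix x' assume x': "x' \<in> Dset n \<and> (\<forall>z\<in>Dset n. vnorm (x' - v) \<le> vnorm (z - v))"
  then have x'D: "x' \<in> Dset n" and "vnorm (x' - v) \<le> vnorm (x - v)" using xD by auto
  then have "(\<Sum>i<n. (x'$i - v$i)^2) \<le> (\<Sum>i<n. (x$i - v$i)^2)"
    using vnorm_le_iff_sum_le[OF Dset_carrier[OF x'D] v Dset_carrier[OF xD] v] by blast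
  then have "(\<Sum>i<n. (x'$i - x$i)^2) \<le> 0" using sum_le[OF x'D] by linarith
  then have "x'$i = x$i" if "i < n" for i
    using sum_power2_le_0_imp_eq_0[of "\<lambda>i. x'$i - x$i" n i] that by simp
  then show "x' = x" using Dset_carrier[OF xD] Dset_carrier[OF x'D] by (intro eq_vecI) auto
qed

lemma kkt_Dset_projD: "v \<in> carrier_vec n \<Longrightarrow> kkt_Dset n v (projD n v)"
proof -
  assume v: "v \<in> carrier_vec n"
  then obtain x where "kkt_Dset n v x" using kkt_Dset_exists by blast
  then show ?thesis using projD_eq_if_kkt_Dset[OF _ v] by simp
qed

lemma projD_in_Dset: "v \<in> carrier_vec n \<Longrightarrow> projD n v \<in> Dset n"
  using kkt_Dset_projD kkt_Dset_in_Dset by blast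

lemma projD_carrier: "v \<in> carrier_vec n \<Longrightarrow> projD n v \<in> carrier_vec n"
  using projD_in_Dset Dset_carrier by blast

lemma projD_nonexpansive:
  assumes v: "v \<in> carrier_vec n" and v': "v' \<in> carrier_vec n"
  shows "vnorm (projD n v' - projD n v) \<le> vnorm (v' - v)"
proof -
  let ?x = "projD n v" and ?x' = "projD n v'"
  define a where "a = (\<lambda>i. ?x'$i - ?x$i)"
  define b where "b = (\<lambda>i. v'$i - v$i)"
  have "(\<Sum>i<n. (?x'$i - ?x$i) * (v$i - ?x$i)) + (\<Sum>i<n. (?x$i - ?x'$i) * (v'$i - ?x'$i))
      = (\<Sum>i<n. (a i)^2 - a i * b i)"
    unfolding sum.distrib[symmetric] a_def b_def
    by (intro sum.cong) (auto simp: algebra_simps power2_eq_square)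
  then have ab: "(\<Sum>i<n. (a i)^2) \<le> (\<Sum>i<n. a i * b i)"
    using kkt_Dset_variational_ineq[OF kkt_Dset_projD[OF v] projD_in_Dset[OF v']]
      kkt_Dset_variational_ineq[OF kkt_Dset_projD[OF v'] projD_in_Dset[OF v]]
    by (simp add: sum_subtractf)
  have "0 \<le> (\<Sum>i<n. (a i - b i)^2)" by (rule sum_nonneg) simp
  also have "(\<Sum>i<n. (a i - b i)^2) = (\<Sum>i<n. (a i)^2) + (\<Sum>i<n. (b i)^2) - 2 * (\<Sum>i<n. a i * b i)"
    by (simp add: power2_eq_square algebra_simps sum.distrib sum_subtractf sum_distrib_left)
  finally have "(\<Sum>i<n. (a i)^2) \<le> (\<Sum>i<n. (b i)^2)" using ab by linarith
  then show ?thesis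
    using vnorm_le_iff_sum_le[OF projD_carrier[OF v'] projD_carrier[OF v] v' v]
    unfolding a_def b_def by blast
qed

section \<open>The multiplier of the projection\<close>

lemma Bmat_carrier[simp]: "Bmat n \<in> carrier_mat (n - 1) n"
  unfolding Bmat_def by simp

lemma dim_Bmat[simp]: "dim_row (Bmat n) = n - 1" "dim_col (Bmat n) = n"
  unfolding Bmat_def by simp_all

lemma Bmat_mult_vec_nth:
  assumes x: "x \<in> carrier_vec n" and i: "i < n - 1"
  shows "(Bmat n *\<^sub>v x) $ i = x$i - x$Suc i"
proof -
  have i': "Suc i < n" using i by arith
  have "(Bmat n *\<^sub>v x) $ i = (\<Sum>j\<in>{0..<n}. Bmat n $$ (i,j) * x$j)"
    using i x by (simp add: scalar_prod_def row_def)
  also have "\<dots> = (\<Sum>j\<in>{0..<n}. (if j = i then x$j else 0) - (if j = Suc i then x$j else 0))"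
    by (rule sum.cong) (use i in \<open>auto simp: Bmat_def\<close>)
  also have "\<dots> = x$i - x$Suc i" using i' by (simp add: sum_subtractf)
  finally show ?thesis .
qed

lemma transpose_Bmat_mult_vec_nth:
  assumes lam: "lam \<in> carrier_vec (n - 1)" and k: "k < n"
  shows "(transpose_mat (Bmat n) *\<^sub>v lam) $ k
    = (if k < n - 1 then lam$k else 0) - (if k = 0 then 0 else lam$(k-1))"
proof -
  have "(transpose_mat (Bmat n) *\<^sub>v lam) $ k = (\<Sum>j\<in>{0..<n-1}. Bmat n $$ (j,k) * lam$j)"
    using k lam by (simp add: scalar_prod_def row_def)
  also have "\<dots> = (\<Sum>j\<in>{0..<n-1}. (if j = k then lam$j else 0)
      - (if k \<noteq> 0 \<and> j = k - 1 then lam$j else 0))"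
    by (rule sum.cong) (use k in \<open>auto simp: Bmat_def\<close>)
  also have "\<dots> = (if k < n - 1 then lam$k else 0) - (if k = 0 then 0 else lam$(k-1))"
    using k by (auto simp: sum_subtractf)
  finally show ?thesis .
qed

lemma transpose_Bmat_prefix_sums:
  assumes d: "d \<in> carrier_vec n" and total: "(\<Sum>j<n. d$j) = 0"
  shows "transpose_mat (Bmat n) *\<^sub>v vec (n - 1) (\<lambda>k. \<Sum>j<Suc k. d$j) = d"
proof (rule eq_vecI)
  fix k assume "k < dim_vec d"
  then have k: "k < n" using d by simp
  let ?S = "\<lambda>k. \<Sum>j<Suc k. d$j"
  have "k \<noteq> 0 \<Longrightarrow> k - 1 < n - 1" using k by arith
  then have "(transpose_mat (Bmat n) *\<^sub>v vec (n - 1) ?S) $ k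
      = (if k < n - 1 then ?S k else 0) - (if k = 0 then 0 else ?S (k - 1))"
    using transpose_Bmat_mult_vec_nth[OF vec_carrier k, of ?S] by (simp del: sum.lessThan_Suc)
  also have "\<dots> = d$k"
  proof (cases "k < n - 1")
    case True
    then show ?thesis by (cases k) simp_all
  next
    case False
    then have "n = Suc k" using k by simp
    then show ?thesis using total by (cases k) simp_all
  qed
  finally show "(transpose_mat (Bmat n) *\<^sub>v vec (n - 1) ?S) $ k = d$k" .
qed (use d in simp)

lemma transpose_Bmat_inj:
  assumes lam: "lam \<in> carrier_vec (n - 1)" and zero: "transpose_mat (Bmat n) *\<^sub>v lam = 0\<^sub>v n"
  shows "lam = 0\<^sub>v (n - 1)"
proof -
  have step: "(if k < n - 1 then lam$k else 0) - (if k = 0 then 0 else lam$(k-1)) = 0"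
    if "k < n" for k
    using zero transpose_Bmat_mult_vec_nth[OF lam that] that
    by (metis index_zero_vec(1))
  have "lam $ k = 0" if "k < n - 1" for k
    using that
  proof (induction k)
    case 0
    then show ?case using step[of 0] by simp
  next
    case (Suc k)
    then show ?case using step[of "Suc k"] by simp
  qed
  then show ?thesis using lam by (intro eq_vecI) auto
qed

lemma vec_minus_eq_0_iff:
  fixes a b :: "'a :: ab_group_add vec"
  assumes "a \<in> carrier_vec n" and "b \<in> carrier_vec n"
  shows "a - b = 0\<^sub>v n \<longleftrightarrow> a = b"
  using assms by (auto simp: vec_eq_iff)

lemma vec_minus_plus_eq_0_iff:
  fixes a b c :: "real vec"
  assumes "a \<in> carrier_vec n" and "b \<in> carrier_vec n" and "c \<in> carrier_vec n"
  shows "a - b + c = 0\<^sub>v n \<longleftrightarrow> c = b - a"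
  using assms by (auto simp: vec_eq_iff algebra_simps)

definition lamD :: "nat \<Rightarrow> real vec \<Rightarrow> real vec" where
  "lamD n v = vec (n - 1) (\<lambda>k. \<Sum>j<Suc k. v$j - projD n v $ j)"

lemma lamD_carrier[simp]: "lamD n v \<in> carrier_vec (n - 1)"
  unfolding lamD_def by simp

lemma dim_lamD[simp]: "dim_vec (lamD n v) = n - 1"
  unfolding lamD_def by simp

lemma lamD_nth: "k < n - 1 \<Longrightarrow> lamD n v $ k = (\<Sum>j<Suc k. v$j - projD n v $ j)"
  unfolding lamD_def by simp

lemma transpose_Bmat_lamD:
  assumes v: "v \<in> carrier_vec n"
  shows "transpose_mat (Bmat n) *\<^sub>v lamD n v = v - projD n v"
proof -
  let ?d = "v - projD n v"
  have x: "projD n v \<in> carrier_vec n" using projD_carrier[OF v] .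
  have "(\<Sum>j<n. ?d$j) = (\<Sum>j<n. v$j - projD n v $ j)" using v x by (intro sum.cong) auto
  also have "\<dots> = 0" using kkt_Dset_projD[OF v] unfolding kkt_Dset_def isotonic_kkt_def by blast
  finally have "transpose_mat (Bmat n) *\<^sub>v vec (n - 1) (\<lambda>k. \<Sum>j<Suc k. ?d$j) = ?d"
    using v x by (intro transpose_Bmat_prefix_sums) auto
  moreover have "vec (n - 1) (\<lambda>k. \<Sum>j<Suc k. ?d$j) = lamD n v"
    unfolding lamD_def using v x by (intro eq_vecI) auto
  ultimately show ?thesis by simp
qed

lemma transpose_Bmat_stationary_iff:
  assumes v: "v \<in> carrier_vec n"
  shows "projD n v - v + transpose_mat (Bmat n) *\<^sub>v lam = 0\<^sub>v n
    \<longleftrightarrow> transpose_mat (Bmat n) *\<^sub>v lam = v - projD n v"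
proof -
  have "transpose_mat (Bmat n) *\<^sub>v lam \<in> carrier_vec n" by (rule carrier_vecI) simp
  then show ?thesis by (rule vec_minus_plus_eq_0_iff[OF projD_carrier[OF v] v])
qed

lemma lamD_in_MD:
  assumes v: "v \<in> carrier_vec n"
  shows "lamD n v \<in> MD n v"
proof -
  let ?x = "projD n v"
  have x: "?x \<in> carrier_vec n" "?x \<in> Dset n" using projD_carrier[OF v] projD_in_Dset[OF v] .
  have kkt: "isotonic_kkt n (\<lambda>j. v $ j) (\<lambda>j. ?x $ j)"
    using kkt_Dset_projD[OF v] unfolding kkt_Dset_def by (rule conjunct2)
  have slack: "lamD n v $ i * (Bmat n *\<^sub>v ?x) $ i = 0" if "i < n - 1" for i
  proof (cases "?x $ Suc i < ?x $ i")
    case True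
    then have "lamD n v $ i = 0" using kkt that unfolding isotonic_kkt_def by (simp add: lamD_nth)
    then show ?thesis by simp
  next
    case False
    then have "?x $ Suc i = ?x $ i" using Dset_antimono[OF x(2), of i] that by simp
    then show ?thesis using Bmat_mult_vec_nth[OF x(1) that] by simp
  qed
  have "\<forall>i < n - 1. (Bmat n *\<^sub>v ?x) $ i \<ge> 0"
    using Bmat_mult_vec_nth[OF x(1)] Dset_antimono[OF x(2)] by simp
  moreover have "\<forall>i < n - 1. lamD n v $ i \<le> 0"
    using kkt unfolding isotonic_kkt_def by (simp add: lamD_nth)
  moreover have "lamD n v \<bullet> (Bmat n *\<^sub>v ?x) = 0"
    unfolding scalar_prod_def using slack by (intro sum.neutral) simp
  moreover have "?x - v + transpose_mat (Bmat n) *\<^sub>v lamD n v = 0\<^sub>v n"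
    using transpose_Bmat_stationary_iff[OF v] transpose_Bmat_lamD[OF v] by blast
  ultimately show ?thesis unfolding MD_def using lamD_carrier[of n v] by simp
qed

lemma MD_eq:
  assumes v: "v \<in> carrier_vec n"
  shows "MD n v = {lamD n v}"
proof (intro equalityI subsetI)
  let ?B = "transpose_mat (Bmat n)"
  fix lam assume "lam \<in> MD n v"
  then have lam: "lam \<in> carrier_vec (n - 1)" and "projD n v - v + ?B *\<^sub>v lam = 0\<^sub>v n"
    unfolding MD_def by blast+
  then have "?B *\<^sub>v lam = ?B *\<^sub>v lamD n v"
    unfolding transpose_Bmat_stationary_iff[OF v] transpose_Bmat_lamD[OF v] by simp
  moreover have "?B *\<^sub>v (lam - lamD n v) = ?B *\<^sub>v lam - ?B *\<^sub>v lamD n v"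
    using lam lamD_carrier by (intro mult_minus_distrib_mat_vec[of _ n "n - 1"]) auto
  moreover have "?B *\<^sub>v lam \<in> carrier_vec n" "?B *\<^sub>v lamD n v \<in> carrier_vec n"
    by (rule carrier_vecI, simp)+
  ultimately have "?B *\<^sub>v (lam - lamD n v) = 0\<^sub>v n" using vec_minus_eq_0_iff by metis
  then have "lam - lamD n v = 0\<^sub>v (n - 1)"
    using lam lamD_carrier[of n v] by (intro transpose_Bmat_inj) auto
  then show "lam \<in> {lamD n v}" using vec_minus_eq_0_iff[OF lam lamD_carrier] by simp
qed (use lamD_in_MD[OF v] in simp)

lemma ID_eq:
  assumes v: "v \<in> carrier_vec n"
  shows "ID n v = {i. i < n - 1 \<and> projD n v $ i = projD n v $ Suc i}"
  unfolding ID_def using Bmat_mult_vec_nth[OF projD_carrier[OF v]] by auto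

lemma KD_eq:
  assumes v: "v \<in> carrier_vec n"
  shows "KD n v = {K. vsupp (lamD n v) \<subseteq> K \<and> K \<subseteq> ID n v \<and> full_row_rank (BK n K)}"
  unfolding KD_def MD_eq[OF v] by auto

lemma KD_subset:
  assumes "v \<in> carrier_vec n" and "K \<in> KD n v"
  shows "K \<subseteq> {..<n - 1}"
  using assms unfolding KD_eq[OF assms(1)] ID_def by auto

lemma exists_pos_lower_bound:
  fixes g :: "'a \<Rightarrow> real"
  assumes "finite A" and "\<And>a. a \<in> A \<Longrightarrow> 0 < g a"
  shows "\<exists>\<delta>>0. \<forall>a\<in>A. \<delta> \<le> g a"
proof (intro exI conjI ballI)
  let ?S = "insert 1 (g ` A)"
  show "0 < Min ?S" using assms by (subst Min_gr_iff) auto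
  show "Min ?S \<le> g a" if "a \<in> A" for a using that assms(1) by (intro Min_le) auto
qed

lemma vnorm_nonneg: "0 \<le> vnorm v"
  unfolding vnorm_def scalar_prod_def by (simp add: sum_nonneg)

lemma abs_nth_minus_le_vnorm:
  assumes "a \<in> carrier_vec n" and "b \<in> carrier_vec n" and "i < n"
  shows "\<bar>a$i - b$i\<bar> \<le> vnorm (a - b)"
  using abs_nth_le_vnorm[of "a - b" n i] assms by simp

lemma abs_nth_projD_minus_le:
  assumes "v \<in> carrier_vec n" and "v' \<in> carrier_vec n" and "i < n"
  shows "\<bar>projD n v' $ i - projD n v $ i\<bar> \<le> vnorm (v' - v)"
  using abs_nth_minus_le_vnorm[OF projD_carrier projD_carrier] projD_nonexpansive assms
  by (meson order_trans)

lemma abs_lamD_minus_le: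
  assumes v: "v \<in> carrier_vec n" and v': "v' \<in> carrier_vec n" and k: "k < n - 1"
  shows "\<bar>lamD n v' $ k - lamD n v $ k\<bar> \<le> real n * (2 * vnorm (v' - v))"
proof -
  let ?x = "projD n v" and ?x' = "projD n v'"
  have "lamD n v' $ k - lamD n v $ k = (\<Sum>j<Suc k. (v'$j - v$j) - (?x'$j - ?x$j))"
    unfolding lamD_nth[OF k] sum_subtractf[symmetric] by (intro sum.cong) auto
  also have "\<bar>\<dots>\<bar> \<le> (\<Sum>j<Suc k. \<bar>(v'$j - v$j) - (?x'$j - ?x$j)\<bar>)" by (rule sum_abs)
  also have "\<dots> \<le> (\<Sum>j<Suc k. 2 * vnorm (v' - v))"
  proof (rule sum_mono)
    fix j assume "j \<in> {..<Suc k}"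
    then have "j < n" using k by auto
    then show "\<bar>(v'$j - v$j) - (?x'$j - ?x$j)\<bar> \<le> 2 * vnorm (v' - v)"
      using abs_nth_minus_le_vnorm[OF v' v] abs_nth_projD_minus_le[OF v v'] by fastforce
  qed
  also have "\<dots> = real (Suc k) * (2 * vnorm (v' - v))" by simp
  also have "\<dots> \<le> real n * (2 * vnorm (v' - v))"
    using k vnorm_nonneg[of "v' - v"] by (intro mult_right_mono) auto
  finally show ?thesis .
qed

text \<open>Strict decreases of \<open>\<Pi>\<^sub>D(v)\<close> and nonzero entries of its multiplier survive small
  perturbations of \<open>v\<close>, because \<open>\<Pi>\<^sub>D\<close> and hence the multiplier are Lipschitz.\<close>
lemma ID_locally_antimono:
  assumes v: "v \<in> carrier_vec n"
  shows "\<exists>\<delta>>0. \<forall>v'\<in>carrier_vec n. vnorm (v' - v) < \<delta> \<longrightarrow> ID n v' \<subseteq> ID n v"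
proof -
  let ?x = "projD n v"
  define gap where "gap k = (if ?x$k = ?x$Suc k then 1 else \<bar>?x$k - ?x$Suc k\<bar> / 3)" for k
  have "0 < gap k" for k unfolding gap_def by auto
  then obtain \<delta> where \<delta>: "\<delta> > 0" "\<forall>k\<in>{..<n - 1}. \<delta> \<le> gap k"
    using exists_pos_lower_bound[of "{..<n - 1}" gap] by blast
  show ?thesis
  proof (intro exI[of _ \<delta>] conjI \<delta>(1) ballI impI subsetI)
    fix v' i assume v': "v' \<in> carrier_vec n" and close: "vnorm (v' - v) < \<delta>" and "i \<in> ID n v'"
    then have i: "i < n - 1" and tie: "projD n v' $ i = projD n v' $ Suc i"
      unfolding ID_eq[OF v'] by auto
    have "\<bar>?x$i - ?x$Suc i\<bar> < 2 * \<delta>"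
      using abs_nth_projD_minus_le[OF v v', of i] abs_nth_projD_minus_le[OF v v', of "Suc i"]
        i tie close by linarith
    moreover have "\<delta> \<le> gap i" using \<delta>(2) i by simp
    then have "3 * \<delta> \<le> \<bar>?x$i - ?x$Suc i\<bar>" if "?x$i \<noteq> ?x$Suc i"
      using that unfolding gap_def by simp
    ultimately have "?x$i = ?x$Suc i" using \<delta>(1) by force
    then show "i \<in> ID n v" unfolding ID_eq[OF v] using i by simp
  qed
qed

lemma vsupp_lamD_locally_mono:
  assumes v: "v \<in> carrier_vec n"
  shows "\<exists>\<delta>>0. \<forall>v'\<in>carrier_vec n. vnorm (v' - v) < \<delta> \<longrightarrow> vsupp (lamD n v) \<subseteq> vsupp (lamD n v')"
proof -
  let ?lam = "lamD n v"
  define size where "size k = (if ?lam $ k = 0 then 1 else \<bar>?lam $ k\<bar> / (2 * real n + 1))" for k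
  have "0 < size k" for k unfolding size_def by auto
  then obtain \<delta> where \<delta>: "\<delta> > 0" "\<forall>k\<in>{..<n - 1}. \<delta> \<le> size k"
    using exists_pos_lower_bound[of "{..<n - 1}" size] by blast
  show ?thesis
  proof (intro exI[of _ \<delta>] conjI \<delta>(1) ballI impI subsetI)
    fix v' k assume v': "v' \<in> carrier_vec n" and close: "vnorm (v' - v) < \<delta>"
      and "k \<in> vsupp ?lam"
    then have k: "k < n - 1" and nz: "?lam $ k \<noteq> 0" unfolding vsupp_def by auto
    have "\<delta> \<le> size k" using \<delta>(2) k by simp
    then have "\<delta> \<le> \<bar>?lam $ k\<bar> / (2 * real n + 1)" using nz unfolding size_def by simp
    then have "\<delta> * (2 * real n + 1) \<le> \<bar>?lam $ k\<bar>"
      by (simp add: pos_le_divide_eq)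
    moreover have "real n * (2 * vnorm (v' - v)) \<le> real n * (2 * \<delta>)"
      using close by (intro mult_left_mono) auto
    then have "\<bar>lamD n v' $ k - ?lam $ k\<bar> \<le> real n * (2 * \<delta>)"
      using abs_lamD_minus_le[OF v v' k] by linarith
    ultimately have "lamD n v' $ k \<noteq> 0" using \<delta>(1) by (auto simp: algebra_simps)
    then show "k \<in> vsupp (lamD n v')" unfolding vsupp_def using k by simp
  qed
qed

section \<open>The projector \<open>Q\<^sub>K\<close>\<close>

text \<open>Row \<open>j\<close> of \<open>B\<^sub>K\<close> is row \<open>pick K j\<close> of \<open>B\<close>, the \<open>j\<close>-th smallest element of \<open>K\<close>; conversely
  \<open>i \<in> K\<close> is row \<open>card {a \<in> K. a < i}\<close> of \<open>B\<^sub>K\<close>.\<close>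

lemma card_less_in_set_less_card:
  fixes i :: "'a :: order"
  assumes "finite K" and "i \<in> K"
  shows "card {a\<in>K. a < i} < card K"
proof -
  have "i \<notin> {a\<in>K. a < i}" by simp
  then have "{a\<in>K. a < i} \<subset> K" using assms(2) by blast
  then show ?thesis using assms(1) by (rule psubset_card_mono[rotated])
qed

lemma pick_in_bounded_set: "K \<subseteq> {..<m} \<Longrightarrow> j < card K \<Longrightarrow> pick K j \<in> K"
  by (rule pick_in_set) (rule disjI1)

lemma bij_betw_pick:
  assumes K: "K \<subseteq> {..<m}"
  shows "bij_betw (pick K) {..<card K} K"
proof (rule bij_betw_imageI)
  have fin: "finite K" using K finite_nat_iff_bounded by blast
  show "inj_on (pick K) {..<card K}"
  proof (rule inj_onI)
    fix a b assume "a \<in> {..<card K}" "b \<in> {..<card K}" "pick K a = pick K b"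
    then show "a = b" using pick_mono[of b K a] pick_mono[of a K b] by (cases a b rule: linorder_cases) auto
  qed
  show "pick K ` {..<card K} = K"
  proof
    show "pick K ` {..<card K} \<subseteq> K" using pick_in_bounded_set[OF K] by auto
    show "K \<subseteq> pick K ` {..<card K}"
    proof
      fix i assume "i \<in> K"
      then show "i \<in> pick K ` {..<card K}"
        using pick_card_in_set[of i K] card_less_in_set_less_card[OF fin] by force
    qed
  qed
qed

lemma BK_carrier:
  assumes K: "K \<subseteq> {..<n - 1}"
  shows "BK n K \<in> carrier_mat (card K) n"
proof -
  have "{i. i < n - 1 \<and> i \<in> K} = K" using K by auto
  then show ?thesis unfolding BK_def by (intro carrier_matI) (simp_all add: dim_submatrix)
qed

lemma BK_index:
  assumes K: "K \<subseteq> {..<n - 1}" and j: "j < card K" and c: "c < n"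
  shows "BK n K $$ (j, c) = Bmat n $$ (pick K j, c)"
proof -
  have "{i. i < n - 1 \<and> i \<in> K} = K" using K by auto
  then have "BK n K $$ (j, c) = Bmat n $$ (pick K j, pick UNIV c)"
    unfolding BK_def using j c by (intro submatrix_index) auto
  then show ?thesis by (simp add: pick_UNIV)
qed

lemma BK_mult_vec_nth:
  assumes K: "K \<subseteq> {..<n - 1}" and j: "j < card K" and z: "z \<in> carrier_vec n"
  shows "(BK n K *\<^sub>v z) $ j = z $ pick K j - z $ Suc (pick K j)"
proof -
  have p: "pick K j < n - 1" using pick_in_bounded_set[OF K j] K by auto
  have "(BK n K *\<^sub>v z) $ j = (\<Sum>c\<in>{0..<n}. BK n K $$ (j,c) * z$c)"
    using BK_carrier[OF K] j z by (simp add: scalar_prod_def row_def)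
  also have "\<dots> = (\<Sum>c\<in>{0..<n}. Bmat n $$ (pick K j,c) * z$c)"
    by (rule sum.cong) (auto simp: BK_index[OF K j])
  also have "\<dots> = (Bmat n *\<^sub>v z) $ pick K j"
    using p z by (simp add: scalar_prod_def row_def)
  also have "\<dots> = z $ pick K j - z $ Suc (pick K j)" using Bmat_mult_vec_nth[OF z p] .
  finally show ?thesis .
qed

lemma BK_mult_vec_eq_0_iff:
  assumes K: "K \<subseteq> {..<n - 1}" and t: "t \<in> carrier_vec n"
  shows "BK n K *\<^sub>v t = 0\<^sub>v (card K) \<longleftrightarrow> (\<forall>i\<in>K. t$i = t$Suc i)"
proof -
  have fin: "finite K" using K finite_nat_iff_bounded by blast
  have "BK n K *\<^sub>v t = 0\<^sub>v (card K) \<longleftrightarrow> (\<forall>j<card K. t $ pick K j = t $ Suc (pick K j))"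
    using BK_carrier[OF K] BK_mult_vec_nth[OF K _ t] by (auto simp: vec_eq_iff)
  also have "\<dots> \<longleftrightarrow> (\<forall>i\<in>pick K ` {..<card K}. t$i = t$Suc i)" by auto
  also have "pick K ` {..<card K} = K" using bij_betw_pick[OF K] by (simp add: bij_betw_def)
  finally show ?thesis .
qed

definition restr_vec :: "nat set \<Rightarrow> real vec \<Rightarrow> real vec" where
  "restr_vec K mu = vec (card K) (\<lambda>j. mu $ pick K j)"

definition expand_vec :: "nat \<Rightarrow> nat set \<Rightarrow> real vec \<Rightarrow> real vec" where
  "expand_vec n K mu = vec (n - 1) (\<lambda>i. if i \<in> K then mu $ card {a\<in>K. a < i} else 0)"

lemma expand_vec_carrier[simp]: "expand_vec n K mu \<in> carrier_vec (n - 1)"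
  unfolding expand_vec_def by simp

lemma restr_expand_vec:
  assumes K: "K \<subseteq> {..<n - 1}" and mu: "mu \<in> carrier_vec (card K)"
  shows "restr_vec K (expand_vec n K mu) = mu"
proof (rule eq_vecI)
  fix j assume "j < dim_vec mu"
  then have j: "j < card K" using mu by simp
  have "pick K j \<in> K" "pick K j < n - 1" using pick_in_bounded_set[OF K j] K by auto
  then show "restr_vec K (expand_vec n K mu) $ j = mu $ j"
    unfolding restr_vec_def expand_vec_def using j card_pick[of j K] by simp
qed (use mu in \<open>simp add: restr_vec_def\<close>)

lemma vsupp_expand_vec: "vsupp (expand_vec n K mu) \<subseteq> K"
  unfolding vsupp_def expand_vec_def by (auto split: if_splits)

lemma transpose_BK_restr_vec:
  assumes K: "K \<subseteq> {..<n - 1}" and mu: "mu \<in> carrier_vec (n - 1)" and supp: "vsupp mu \<subseteq> K"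
  shows "transpose_mat (BK n K) *\<^sub>v restr_vec K mu = transpose_mat (Bmat n) *\<^sub>v mu"
proof (rule eq_vecI)
  have BK: "BK n K \<in> carrier_mat (card K) n" using BK_carrier[OF K] .
  then show "dim_vec (transpose_mat (BK n K) *\<^sub>v restr_vec K mu) = dim_vec (transpose_mat (Bmat n) *\<^sub>v mu)"
    by simp
  fix c assume "c < dim_vec (transpose_mat (Bmat n) *\<^sub>v mu)"
  then have c: "c < n" by simp
  have "(transpose_mat (BK n K) *\<^sub>v restr_vec K mu) $ c
      = (\<Sum>j\<in>{..<card K}. BK n K $$ (j,c) * mu $ pick K j)"
    using BK c by (simp add: scalar_prod_def row_def restr_vec_def atLeast0LessThan)
  also have "\<dots> = (\<Sum>j\<in>{..<card K}. Bmat n $$ (pick K j, c) * mu $ pick K j)"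
    by (rule sum.cong) (auto simp: BK_index[OF K _ c])
  also have "\<dots> = (\<Sum>i\<in>K. Bmat n $$ (i, c) * mu $ i)"
    using sum.reindex_bij_betw[OF bij_betw_pick[OF K]] .
  also have "\<dots> = (\<Sum>i\<in>{..<n - 1}. Bmat n $$ (i, c) * mu $ i)"
    using K supp mu unfolding vsupp_def by (intro sum.mono_neutral_left) auto
  also have "\<dots> = (transpose_mat (Bmat n) *\<^sub>v mu) $ c"
    using c mu by (simp add: scalar_prod_def row_def atLeast0LessThan)
  finally show "(transpose_mat (BK n K) *\<^sub>v restr_vec K mu) $ c = (transpose_mat (Bmat n) *\<^sub>v mu) $ c" .
qed

lemma scalar_prod_self_eq_0_imp:
  assumes q: "(q :: real vec) \<in> carrier_vec m" and "q \<bullet> q = 0"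
  shows "q = 0\<^sub>v m"
proof -
  have "(\<Sum>i<m. (q$i)^2) \<le> 0"
    using assms unfolding scalar_prod_def by (simp add: atLeast0LessThan power2_eq_square)
  then have "q$i = 0" if "i < m" for i using sum_power2_le_0_imp_eq_0[of "\<lambda>i. q$i" m i] that by simp
  then show ?thesis using q by (intro eq_vecI) auto
qed

lemma transpose_BK_inj:
  assumes K: "K \<subseteq> {..<n - 1}" and mu: "mu \<in> carrier_vec (card K)"
    and zero: "transpose_mat (BK n K) *\<^sub>v mu = 0\<^sub>v n"
  shows "mu = 0\<^sub>v (card K)"
proof -
  have "transpose_mat (Bmat n) *\<^sub>v expand_vec n K mu = 0\<^sub>v n"
    using transpose_BK_restr_vec[OF K expand_vec_carrier vsupp_expand_vec, of mu]
      restr_expand_vec[OF K mu] zero by simp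
  then have "expand_vec n K mu = 0\<^sub>v (n - 1)"
    using expand_vec_carrier[of n K mu] by (intro transpose_Bmat_inj) simp_all
  then have "restr_vec K (0\<^sub>v (n - 1)) = mu" using restr_expand_vec[OF K mu] by simp
  moreover have "pick K j < n - 1" if "j < card K" for j using pick_in_bounded_set[OF K that] K by auto
  ultimately show ?thesis unfolding restr_vec_def by (auto simp: vec_eq_iff)
qed

lemma BK_gram_det_nonzero:
  assumes K: "K \<subseteq> {..<n - 1}"
  shows "det (BK n K * transpose_mat (BK n K)) \<noteq> 0"
proof
  let ?B = "BK n K" and ?c = "card K"
  have B: "?B \<in> carrier_mat ?c n" using BK_carrier[OF K] .
  assume "det (?B * transpose_mat ?B) = 0"
  then obtain mu where mu: "mu \<in> carrier_vec ?c" "mu \<noteq> 0\<^sub>v ?c"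
    and "(?B * transpose_mat ?B) *\<^sub>v mu = 0\<^sub>v ?c"
    using det_0_iff_vec_prod_zero[of "?B * transpose_mat ?B" ?c] B by auto
  then have "?B *\<^sub>v (transpose_mat ?B *\<^sub>v mu) = 0\<^sub>v ?c" using B by auto
  then have "(transpose_mat ?B *\<^sub>v mu) \<bullet> (transpose_mat ?B *\<^sub>v mu) = 0"
    using transpose_vec_mult_scalar[OF B _ mu(1), of "transpose_mat ?B *\<^sub>v mu"] B mu(1) by simp
  moreover have "transpose_mat ?B *\<^sub>v mu \<in> carrier_vec n"
    using B mu(1) by (metis mult_mat_vec_carrier transpose_carrier_mat)
  ultimately have "transpose_mat ?B *\<^sub>v mu = 0\<^sub>v n" using scalar_prod_self_eq_0_imp by blast
  then show False using transpose_BK_inj[OF K mu(1)] mu(2) by simp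
qed

lemma mat_inverse_the:
  fixes A :: "'a :: field mat"
  assumes A: "A \<in> carrier_mat m m" and "det A \<noteq> 0"
  shows "the (mat_inverse A) \<in> carrier_mat m m" "A * the (mat_inverse A) = 1\<^sub>m m"
    "the (mat_inverse A) * A = 1\<^sub>m m"
proof -
  have "A \<in> Units (ring_mat TYPE('a) m undefined)"
    using det_non_zero_imp_unit[OF assms] .
  then obtain C where C: "mat_inverse A = Some C"
    using mat_inverse(1)[OF A, of undefined] by (cases "mat_inverse A") auto
  then show "the (mat_inverse A) \<in> carrier_mat m m" "A * the (mat_inverse A) = 1\<^sub>m m"
    "the (mat_inverse A) * A = 1\<^sub>m m"
    using mat_inverse(2)[OF A C] by auto
qed

text \<open>\<open>Q\<^sub>K = I - B\<^sub>K\<^sup>T (B\<^sub>K B\<^sub>K\<^sup>T)\<^sup>-\<^sup>1 B\<^sub>K\<close>, the orthogonal projector onto \<open>{x. B\<^sub>K x = 0}\<close>.\<close>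
definition gram_inv :: "nat \<Rightarrow> nat set \<Rightarrow> real mat" where
  "gram_inv n K = the (mat_inverse (BK n K * transpose_mat (BK n K)))"

definition QK :: "nat \<Rightarrow> nat set \<Rightarrow> real mat" where
  "QK n K = 1\<^sub>m n - transpose_mat (BK n K) * gram_inv n K * BK n K"

lemma QD_eq: "QD n w = QK n ` KD n w"
  unfolding QD_def QK_def gram_inv_def by auto

lemma
  assumes K: "K \<subseteq> {..<n - 1}"
  shows gram_inv_carrier: "gram_inv n K \<in> carrier_mat (card K) (card K)"
    and gram_inv_right: "BK n K * transpose_mat (BK n K) * gram_inv n K = 1\<^sub>m (card K)"
    and gram_inv_left: "gram_inv n K * (BK n K * transpose_mat (BK n K)) = 1\<^sub>m (card K)"
proof -
  have "BK n K * transpose_mat (BK n K) \<in> carrier_mat (card K) (card K)"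
    using BK_carrier[OF K] by simp
  from mat_inverse_the[OF this BK_gram_det_nonzero[OF K]]
  show "gram_inv n K \<in> carrier_mat (card K) (card K)"
    "BK n K * transpose_mat (BK n K) * gram_inv n K = 1\<^sub>m (card K)"
    "gram_inv n K * (BK n K * transpose_mat (BK n K)) = 1\<^sub>m (card K)"
    unfolding gram_inv_def by auto
qed

lemma QK_carrier:
  assumes K: "K \<subseteq> {..<n - 1}"
  shows "QK n K \<in> carrier_mat n n"
  unfolding QK_def using BK_carrier[OF K] gram_inv_carrier[OF K]
  by (intro minus_carrier_mat mult_carrier_mat[of _ n "card K"]) auto

lemma QK_mult_vec:
  assumes K: "K \<subseteq> {..<n - 1}" and d: "d \<in> carrier_vec n"
  shows "QK n K *\<^sub>v d = d - transpose_mat (BK n K) *\<^sub>v (gram_inv n K *\<^sub>v (BK n K *\<^sub>v d))"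
proof -
  have B: "BK n K \<in> carrier_mat (card K) n" and G: "gram_inv n K \<in> carrier_mat (card K) (card K)"
    using BK_carrier[OF K] gram_inv_carrier[OF K] .
  have "QK n K *\<^sub>v d = 1\<^sub>m n *\<^sub>v d - (transpose_mat (BK n K) * gram_inv n K * BK n K) *\<^sub>v d"
    unfolding QK_def using B G d by (intro minus_mult_distrib_mat_vec) auto
  also have "(transpose_mat (BK n K) * gram_inv n K * BK n K) *\<^sub>v d
      = transpose_mat (BK n K) *\<^sub>v (gram_inv n K *\<^sub>v (BK n K *\<^sub>v d))"
    using B G d by (simp add: assoc_mult_mat_vec[of _ n "card K" _ n])
  finally show ?thesis using d by simp
qed

lemma QK_mult_vec_eq_if_decomp:
  assumes K: "K \<subseteq> {..<n - 1}" and d: "d \<in> carrier_vec n" and e: "e \<in> carrier_vec n"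
    and Be: "BK n K *\<^sub>v e = 0\<^sub>v (card K)"
    and mu: "mu \<in> carrier_vec (n - 1)" and supp: "vsupp mu \<subseteq> K"
    and decomp: "d = e + transpose_mat (Bmat n) *\<^sub>v mu"
  shows "QK n K *\<^sub>v d = e"
proof -
  let ?B = "BK n K" and ?c = "card K" and ?r = "restr_vec K mu"
  have B: "?B \<in> carrier_mat ?c n" and G: "gram_inv n K \<in> carrier_mat ?c ?c"
    using BK_carrier[OF K] gram_inv_carrier[OF K] .
  have r: "?r \<in> carrier_vec ?c" unfolding restr_vec_def by simp
  have T: "transpose_mat (Bmat n) *\<^sub>v mu = transpose_mat ?B *\<^sub>v ?r"
    using transpose_BK_restr_vec[OF K mu supp] by simp
  have Tr: "transpose_mat ?B *\<^sub>v ?r \<in> carrier_vec n" using B r by simp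
  have "?B *\<^sub>v d = ?B *\<^sub>v e + ?B *\<^sub>v (transpose_mat ?B *\<^sub>v ?r)"
    unfolding decomp T by (rule mult_add_distrib_mat_vec[OF B e Tr])
  also have "?B *\<^sub>v (transpose_mat ?B *\<^sub>v ?r) = (?B * transpose_mat ?B) *\<^sub>v ?r"
    using B r by (simp add: assoc_mult_mat_vec[of _ ?c n _ ?c])
  finally have "?B *\<^sub>v d = (?B * transpose_mat ?B) *\<^sub>v ?r" using Be B r by simp
  then have "gram_inv n K *\<^sub>v (?B *\<^sub>v d) = (gram_inv n K * (?B * transpose_mat ?B)) *\<^sub>v ?r"
    using B G r by (simp add: assoc_mult_mat_vec[of _ ?c ?c _ ?c])
  also have "\<dots> = ?r" using gram_inv_left[OF K] r by simp
  finally have "QK n K *\<^sub>v d = d - transpose_mat ?B *\<^sub>v ?r" using QK_mult_vec[OF K d] by simp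
  also have "\<dots> = e"
    unfolding decomp T using carrier_vecD[OF e] carrier_vecD[OF Tr] by (auto simp: vec_eq_iff)
  finally show ?thesis .
qed

lemma BK_mult_QK_mult_vec:
  assumes K: "K \<subseteq> {..<n - 1}" and z: "z \<in> carrier_vec n"
  shows "BK n K *\<^sub>v (QK n K *\<^sub>v z) = 0\<^sub>v (card K)"
proof -
  let ?B = "BK n K" and ?c = "card K"
  have B: "?B \<in> carrier_mat ?c n" and G: "gram_inv n K \<in> carrier_mat ?c ?c"
    using BK_carrier[OF K] gram_inv_carrier[OF K] .
  let ?y = "gram_inv n K *\<^sub>v (?B *\<^sub>v z)"
  have y: "?y \<in> carrier_vec ?c" using G B z by simp
  have "?B *\<^sub>v (QK n K *\<^sub>v z) = ?B *\<^sub>v z - ?B *\<^sub>v (transpose_mat ?B *\<^sub>v ?y)"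
    unfolding QK_mult_vec[OF K z] using B z y by (intro mult_minus_distrib_mat_vec) auto
  also have "?B *\<^sub>v (transpose_mat ?B *\<^sub>v ?y) = (?B * transpose_mat ?B * gram_inv n K) *\<^sub>v (?B *\<^sub>v z)"
    using B G y z by (simp add: assoc_mult_mat_vec[of _ ?c n _ ?c] assoc_mult_mat_vec[of _ ?c ?c _ ?c])
  also have "\<dots> = ?B *\<^sub>v z" using gram_inv_right[OF K] B z by simp
  finally show ?thesis using B z by simp
qed

lemma QK_mult_vec_eq_0_if_orthogonal:
  assumes K: "K \<subseteq> {..<n - 1}" and z: "z \<in> carrier_vec n"
    and orth: "\<forall>t\<in>carrier_vec n. (\<forall>i\<in>K. t$i = t$Suc i) \<longrightarrow> z \<bullet> t = 0"
  shows "QK n K *\<^sub>v z = 0\<^sub>v n"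
proof -
  let ?B = "BK n K" and ?c = "card K"
  have B: "?B \<in> carrier_mat ?c n" and G: "gram_inv n K \<in> carrier_mat ?c ?c"
    using BK_carrier[OF K] gram_inv_carrier[OF K] .
  let ?y = "gram_inv n K *\<^sub>v (?B *\<^sub>v z)" and ?q = "QK n K *\<^sub>v z"
  have y: "?y \<in> carrier_vec ?c" using G B z by simp
  have q: "?q \<in> carrier_vec n" using QK_carrier[OF K] z by simp
  have Bq: "?B *\<^sub>v ?q = 0\<^sub>v ?c" using BK_mult_QK_mult_vec[OF K z] .
  have Ty: "transpose_mat ?B *\<^sub>v ?y \<in> carrier_vec n" using B y by simp
  have "?q \<bullet> ?q = (z - transpose_mat ?B *\<^sub>v ?y) \<bullet> ?q" using QK_mult_vec[OF K z] by simp
  also have "\<dots> = z \<bullet> ?q - (transpose_mat ?B *\<^sub>v ?y) \<bullet> ?q"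
    using z Ty q by (simp add: minus_scalar_prod_distrib)
  also have "(transpose_mat ?B *\<^sub>v ?y) \<bullet> ?q = ?y \<bullet> (?B *\<^sub>v ?q)"
    by (rule transpose_vec_mult_scalar[OF B q y])
  also have "\<dots> = 0" using Bq y by simp
  also have "z \<bullet> ?q = 0" using orth q Bq BK_mult_vec_eq_0_iff[OF K q] by blast
  finally have "?q \<bullet> ?q = 0" by simp
  then show ?thesis using scalar_prod_self_eq_0_imp[OF q] by blast
qed

lemma projD_diff_decomp:
  assumes v: "v \<in> carrier_vec n" and v': "v' \<in> carrier_vec n"
  shows "v' - v = (projD n v' - projD n v) + transpose_mat (Bmat n) *\<^sub>v (lamD n v' - lamD n v)"
proof -
  have "transpose_mat (Bmat n) *\<^sub>v (lamD n v' - lamD n v)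
      = transpose_mat (Bmat n) *\<^sub>v lamD n v' - transpose_mat (Bmat n) *\<^sub>v lamD n v"
    using lamD_carrier[of n v] lamD_carrier[of n v'] by (intro mult_minus_distrib_mat_vec) auto
  then show ?thesis
    using transpose_Bmat_lamD[OF v] transpose_Bmat_lamD[OF v'] v v' projD_carrier[OF v] projD_carrier[OF v']
    by (auto simp: vec_eq_iff)
qed

text \<open>Near \<open>v\<close>, both projections lie on the face \<open>B\<^sub>K x = 0\<close> of \<open>D\<close> for every \<open>K \<in> \<K>\<^sub>D(v')\<close>,
  and \<open>v' - v\<close> differs from \<open>\<Pi>\<^sub>D(v') - \<Pi>\<^sub>D(v)\<close> by \<open>B\<^sup>T\<close> applied to a multiplier supported in \<open>K\<close>.\<close>
lemma projD_locally_affine: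
  assumes v: "v \<in> carrier_vec n"
  shows "\<exists>\<delta>>0. \<forall>v'\<in>carrier_vec n. vnorm (v' - v) < \<delta> \<longrightarrow>
     KD n v' \<subseteq> KD n v \<and> (\<forall>K\<in>KD n v'. projD n v' = projD n v + QK n K *\<^sub>v (v' - v))"
proof -
  obtain \<delta>1 where \<delta>1: "\<delta>1 > 0" "\<forall>v'\<in>carrier_vec n. vnorm (v' - v) < \<delta>1 \<longrightarrow> ID n v' \<subseteq> ID n v"
    using ID_locally_antimono[OF v] by blast
  obtain \<delta>2 where \<delta>2: "\<delta>2 > 0"
    "\<forall>v'\<in>carrier_vec n. vnorm (v' - v) < \<delta>2 \<longrightarrow> vsupp (lamD n v) \<subseteq> vsupp (lamD n v')"
    using vsupp_lamD_locally_mono[OF v] by blast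
  show ?thesis
  proof (intro exI[of _ "min \<delta>1 \<delta>2"] conjI ballI impI)
    show "min \<delta>1 \<delta>2 > 0" using \<delta>1 \<delta>2 by simp
    fix v' assume v': "v' \<in> carrier_vec n" and close: "vnorm (v' - v) < min \<delta>1 \<delta>2"
    have ID: "ID n v' \<subseteq> ID n v" and supp: "vsupp (lamD n v) \<subseteq> vsupp (lamD n v')"
      using \<delta>1 \<delta>2 v' close by auto
    show "KD n v' \<subseteq> KD n v" using ID supp unfolding KD_eq[OF v] KD_eq[OF v'] by blast
    fix K assume "K \<in> KD n v'"
    then have supp': "vsupp (lamD n v') \<subseteq> K" and KI: "K \<subseteq> ID n v'" unfolding KD_eq[OF v'] by auto
    have K: "K \<subseteq> {..<n - 1}" using KI unfolding ID_def by auto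
    let ?x = "projD n v" and ?x' = "projD n v'" and ?mu = "lamD n v' - lamD n v"
    have x: "?x \<in> carrier_vec n" "?x' \<in> carrier_vec n" using projD_carrier v v' by auto
    have mu: "?mu \<in> carrier_vec (n - 1)" using lamD_carrier[of n v] lamD_carrier[of n v'] by simp
    have mu_supp: "vsupp ?mu \<subseteq> K"
    proof
      fix i assume "i \<in> vsupp ?mu"
      then have "i < n - 1" "lamD n v' $ i \<noteq> lamD n v $ i" unfolding vsupp_def by auto
      then show "i \<in> K" using supp supp' unfolding vsupp_def by (cases "lamD n v' $ i = 0") auto
    qed
    have "\<forall>i\<in>K. (?x' - ?x)$i = (?x' - ?x)$Suc i"
    proof
      fix i assume "i \<in> K"
      then have "i < n - 1" "?x'$i = ?x'$Suc i" "?x$i = ?x$Suc i"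
        using KI ID unfolding ID_eq[OF v] ID_eq[OF v'] by auto
      then show "(?x' - ?x)$i = (?x' - ?x)$Suc i" using x by simp
    qed
    then have face: "BK n K *\<^sub>v (?x' - ?x) = 0\<^sub>v (card K)"
      using BK_mult_vec_eq_0_iff[OF K] x by simp
    note decomp = projD_diff_decomp[OF v v']
    have "QK n K *\<^sub>v (v' - v) = ?x' - ?x"
      by (rule QK_mult_vec_eq_if_decomp[OF K _ _ face mu mu_supp decomp]) (use v v' x in auto)
    then show "?x' = ?x + QK n K *\<^sub>v (v' - v)" using x by auto
  qed
qed

section \<open>Reduction of \<open>S\<^sub>\<rho>\<close> to the projection onto \<open>D\<close>\<close>

definition pmat :: "nat \<Rightarrow> (nat \<Rightarrow> nat) \<Rightarrow> real mat" where
  "pmat n \<sigma> = mat n n (\<lambda>(i, j). if \<sigma> i = j then 1 else 0)"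

lemma pmat_carrier[simp]: "pmat n \<sigma> \<in> carrier_mat n n"
  unfolding pmat_def by simp

lemma dim_pmat[simp]: "dim_row (pmat n \<sigma>) = n" "dim_col (pmat n \<sigma>) = n"
  unfolding pmat_def by simp_all

lemma perm_matrix_pmat:
  assumes "perm_matrix n M"
  obtains \<sigma> where "\<sigma> permutes {..<n}" and "M = pmat n \<sigma>"
  using assms unfolding perm_matrix_def pmat_def by blast

lemma pmat_mult_vec_nth:
  assumes s: "\<sigma> permutes {..<n}" and z: "z \<in> carrier_vec n" and i: "i < n"
  shows "(pmat n \<sigma> *\<^sub>v z) $ i = z $ \<sigma> i"
proof -
  have "(pmat n \<sigma> *\<^sub>v z) $ i = (\<Sum>j\<in>{0..<n}. (if \<sigma> i = j then 1 else 0) * z$j)"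
    using i z by (simp add: pmat_def scalar_prod_def row_def)
  also have "\<dots> = (\<Sum>j\<in>{0..<n}. if j = \<sigma> i then z$j else 0)" by (intro sum.cong) auto
  also have "\<dots> = z $ \<sigma> i" using permutes_in_image[OF s] i by simp
  finally show ?thesis .
qed

lemma transpose_pmat_mult_vec_nth:
  assumes s: "\<sigma> permutes {..<n}" and z: "z \<in> carrier_vec n" and i: "i < n"
  shows "(transpose_mat (pmat n \<sigma>) *\<^sub>v z) $ i = z $ Hilbert_Choice.inv \<sigma> i"
proof -
  have "(transpose_mat (pmat n \<sigma>) *\<^sub>v z) $ i = (\<Sum>j\<in>{0..<n}. (if \<sigma> j = i then 1 else 0) * z$j)"
    using i z by (simp add: pmat_def scalar_prod_def row_def)
  also have "\<dots> = (\<Sum>j\<in>{0..<n}. if j = Hilbert_Choice.inv \<sigma> i then z$j else 0)"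
  proof (rule sum.cong[OF refl])
    fix j
    have "\<sigma> j = i \<longleftrightarrow> j = Hilbert_Choice.inv \<sigma> i" using permutes_inv_eq[OF s, of i j] by metis
    then show "(if \<sigma> j = i then 1 else 0) * z$j = (if j = Hilbert_Choice.inv \<sigma> i then z$j else 0)"
      by simp
  qed
  also have "\<dots> = z $ Hilbert_Choice.inv \<sigma> i" using permutes_in_image[OF permutes_inv[OF s]] i by simp
  finally show ?thesis .
qed

lemma sum_permutes_lessThan:
  fixes h :: "nat \<Rightarrow> real"
  assumes "\<sigma> permutes {..<n}"
  shows "(\<Sum>i<n. h (\<sigma> i)) = (\<Sum>i<n. h i)"
  using sum.permute[OF assms, of h] by (simp add: comp_def)

lemma vnorm_pmat_mult_vec:
  assumes s: "\<sigma> permutes {..<n}" and d: "d \<in> carrier_vec n"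
  shows "vnorm (pmat n \<sigma> *\<^sub>v d) = vnorm d"
proof -
  have "(\<Sum>i<n. ((pmat n \<sigma> *\<^sub>v d) $ i)^2) = (\<Sum>i<n. (d $ \<sigma> i)^2)"
    using pmat_mult_vec_nth[OF s d] by (intro sum.cong) auto
  also have "\<dots> = (\<Sum>i<n. (d $ i)^2)" by (rule sum_permutes_lessThan[OF s])
  moreover have "pmat n \<sigma> *\<^sub>v d \<in> carrier_vec n" by (rule carrier_vecI) simp
  ultimately show ?thesis using vnorm_eq_sqrt_sum[OF d] vnorm_eq_sqrt_sum by metis
qed

lemma wvec_nth: "i < n \<Longrightarrow> wvec n $ i = real n - 2 * real i - 1"
  unfolding wvec_def by simp

lemma dim_wvec[simp]: "dim_vec (wvec n) = n"
  unfolding wvec_def by simp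

lemma wvec_carrier[simp]: "wvec n \<in> carrier_vec n"
  unfolding wvec_def by simp

definition pairwise_dist_sum :: "nat \<Rightarrow> (nat \<Rightarrow> real) \<Rightarrow> real" where
  "pairwise_dist_sum n f = (\<Sum>j<n. \<Sum>i<j. \<bar>f i - f j\<bar>)"

lemma pairwise_dist_sum_cong:
  "(\<And>i. i < n \<Longrightarrow> f i = g i) \<Longrightarrow> pairwise_dist_sum n f = pairwise_dist_sum n g"
  unfolding pairwise_dist_sum_def by (intro sum.cong refl) auto

lemma pairwise_dist_sum_double:
  "2 * pairwise_dist_sum n f = (\<Sum>i<n. \<Sum>j<n. \<bar>f i - f j\<bar>)"
proof (induction n)
  case (Suc n)
  have "(\<Sum>i<Suc n. \<Sum>j<Suc n. \<bar>f i - f j\<bar>)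
      = (\<Sum>i<n. \<Sum>j<n. \<bar>f i - f j\<bar>) + 2 * (\<Sum>i<n. \<bar>f i - f n\<bar>)"
    by (simp add: sum.distrib abs_minus_commute)
  then show ?case using Suc by (simp add: pairwise_dist_sum_def)
qed (simp add: pairwise_dist_sum_def)

lemma pairwise_dist_sum_permute:
  assumes s: "\<sigma> permutes {..<n}"
  shows "pairwise_dist_sum n (\<lambda>i. f (\<sigma> i)) = pairwise_dist_sum n f"
proof -
  have "(\<Sum>i<n. \<Sum>j<n. \<bar>f (\<sigma> i) - f (\<sigma> j)\<bar>) = (\<Sum>i<n. \<Sum>j<n. \<bar>f (\<sigma> i) - f j\<bar>)"
    by (intro sum.cong refl sum_permutes_lessThan[OF s])
  also have "\<dots> = (\<Sum>i<n. \<Sum>j<n. \<bar>f i - f j\<bar>)"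
    by (rule sum_permutes_lessThan[OF s, of "\<lambda>i. \<Sum>j<n. \<bar>f i - f j\<bar>"])
  finally show ?thesis using pairwise_dist_sum_double[of n] by (metis mult_cancel_left zero_neq_numeral)
qed

lemma pairwise_dist_sum_antimono:
  fixes f :: "nat \<Rightarrow> real"
  assumes "\<forall>i. Suc i < n \<longrightarrow> f (Suc i) \<le> f i"
  shows "pairwise_dist_sum n f = (\<Sum>k<n. (real n - 2 * real k - 1) * f k)"
  using assms
proof (induction n)
  case (Suc n)
  have "(\<Sum>i<n. \<bar>f i - f n\<bar>) = (\<Sum>i<n. f i - f n)"
    using antimono_upto_le[OF Suc.prems, of _ n] by (intro sum.cong) auto
  moreover have "pairwise_dist_sum n f = (\<Sum>k<n. (real n - 2 * real k - 1) * f k)"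
    using Suc by simp
  moreover have "(\<Sum>k<n. (real (Suc n) - 2 * real k - 1) * f k)
      = (\<Sum>k<n. (real n - 2 * real k - 1) * f k) + (\<Sum>k<n. f k)"
    by (simp add: sum.distrib[symmetric] algebra_simps)
  ultimately show ?case by (simp add: pairwise_dist_sum_def sum_subtractf algebra_simps)
qed (simp add: pairwise_dist_sum_def)

lemma swap_min_to_end_gain:
  fixes s t :: "nat \<Rightarrow> real"
  assumes s: "\<forall>i. Suc i < Suc n \<longrightarrow> s (Suc i) \<le> s i" and p: "p \<le> n"
    and pmin: "\<forall>i\<le>n. t p \<le> t i"
  shows "(\<Sum>i<Suc n. t i * s i) \<le> (\<Sum>i<Suc n. t (Transposition.transpose p n i) * s i)"
proof (cases "p = n")
  case False
  let ?g = "\<lambda>i. (t (Transposition.transpose p n i) - t i) * s i"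
  have "(\<Sum>i<Suc n. ?g i) = ?g n + (\<Sum>i\<in>{..<Suc n} - {n}. ?g i)"
    by (rule sum.remove) auto
  also have "(\<Sum>i\<in>{..<Suc n} - {n}. ?g i) = ?g p + (\<Sum>i\<in>{..<Suc n} - {n} - {p}. ?g i)"
    by (rule sum.remove) (use p False in auto)
  also have "(\<Sum>i\<in>{..<Suc n} - {n} - {p}. ?g i) = 0"
    by (rule sum.neutral) auto
  also have "?g n + (?g p + 0) = (t n - t p) * (s p - s n)"
    using False by (simp add: algebra_simps)
  also have "\<dots> \<ge> 0"
    using pmin antimono_upto_le[OF s, of p n] p by simp
  finally show ?thesis by (simp add: sum_subtractf algebra_simps)
qed simp

lemma rearrangement_ineq:
  fixes s t :: "nat \<Rightarrow> real"
  assumes "\<forall>i. Suc i < n \<longrightarrow> s (Suc i) \<le> s i"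
  shows "\<exists>\<pi>. \<pi> permutes {..<n} \<and> (\<forall>i. Suc i < n \<longrightarrow> t (\<pi> (Suc i)) \<le> t (\<pi> i))
            \<and> (\<Sum>i<n. t i * s i) \<le> (\<Sum>i<n. t (\<pi> i) * s i)"
  using assms
proof (induction n arbitrary: t)
  case 0
  then show ?case by (intro exI[of _ id]) (auto simp: permutes_id)
next
  case (Suc n)
  have "finite (t ` {..n})" "t ` {..n} \<noteq> {}" by auto
  then obtain p where p: "p \<le> n" "t p = Min (t ` {..n})" by (metis Min_in atMost_iff imageE)
  have pmin: "\<forall>i\<le>n. t p \<le> t i" using p(2) by simp
  define \<tau> where "\<tau> = Transposition.transpose p n"
  have \<tau>: "\<tau> permutes {..<Suc n}" unfolding \<tau>_def using p by (intro permutes_swap_id) auto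
  obtain \<pi>' where \<pi>': "\<pi>' permutes {..<n}" "\<forall>i. Suc i < n \<longrightarrow> t (\<tau> (\<pi>' (Suc i))) \<le> t (\<tau> (\<pi>' i))"
     "(\<Sum>i<n. t (\<tau> i) * s i) \<le> (\<Sum>i<n. t (\<tau> (\<pi>' i)) * s i)"
    using Suc.IH[of "\<lambda>i. t (\<tau> i)"] Suc.prems by fastforce
  have \<pi>'n: "\<pi>' n = n" using \<pi>'(1) unfolding permutes_def by auto
  have \<pi>: "\<tau> \<circ> \<pi>' permutes {..<Suc n}"
    using permutes_compose[OF permutes_subset[OF \<pi>'(1)] \<tau>] by auto
  show ?case
  proof (intro exI[of _ "\<tau> \<circ> \<pi>'"] conjI \<pi> allI impI)
    fix i assume i: "Suc i < Suc n"
    show "t ((\<tau> \<circ> \<pi>') (Suc i)) \<le> t ((\<tau> \<circ> \<pi>') i)"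
    proof (cases "Suc i < n")
      case True
      then show ?thesis using \<pi>'(2) by simp
    next
      case False
      then have "Suc i = n" using i by simp
      then have "(\<tau> \<circ> \<pi>') (Suc i) = p" using \<pi>'n by (simp add: \<tau>_def)
      moreover have "(\<tau> \<circ> \<pi>') i \<le> n" using permutes_in_image[OF \<pi>, of i] i by simp
      ultimately show ?thesis using pmin by simp
    qed
  next
    have "(\<Sum>i<Suc n. t i * s i) \<le> (\<Sum>i<Suc n. t (\<tau> i) * s i)"
      unfolding \<tau>_def using swap_min_to_end_gain[OF Suc.prems p(1) pmin] .
    also have "\<dots> \<le> (\<Sum>i<Suc n. t ((\<tau> \<circ> \<pi>') i) * s i)" using \<pi>'(3) \<pi>'n by simp
    finally show "(\<Sum>i<Suc n. t i * s i) \<le> (\<Sum>i<Suc n. t ((\<tau> \<circ> \<pi>') i) * s i)" .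
  qed
qed

lemma sum_sq_dist_le_if_rearranged:
  fixes s t :: "nat \<Rightarrow> real"
  assumes \<pi>: "\<pi> permutes {..<n}" and le: "(\<Sum>i<n. t i * s i) \<le> (\<Sum>i<n. t (\<pi> i) * s i)"
  shows "(\<Sum>i<n. (t (\<pi> i) - s i)^2) \<le> (\<Sum>i<n. (t i - s i)^2)"
proof -
  have expand: "(\<Sum>i<n. (q i - s i)^2)
      = (\<Sum>i<n. (q i)^2) - 2 * (\<Sum>i<n. q i * s i) + (\<Sum>i<n. (s i)^2)" for q
    by (simp add: power2_eq_square algebra_simps sum.distrib sum_subtractf sum_distrib_left)
  have "(\<Sum>i<n. (t (\<pi> i))^2) = (\<Sum>i<n. (t i)^2)" by (rule sum_permutes_lessThan[OF \<pi>])
  then show ?thesis unfolding expand[of "\<lambda>i. t (\<pi> i)"] expand[of t] using le by simp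
qed

lemma Sobj_eq:
  assumes z: "z \<in> carrier_vec n" and y: "y \<in> carrier_vec n"
  shows "Sobj n \<rho> y z = (\<Sum>i<n. (z$i - y$i)^2) / 2 + \<rho> * pairwise_dist_sum n (\<lambda>i. z$i)"
proof -
  have "(vnorm (z - y))^2 = (\<Sum>i<n. (z$i - y$i)^2)"
    using vnorm_minus_eq_sqrt_sum[OF z y] by (simp add: sum_nonneg)
  then show ?thesis unfolding Sobj_def pairwise_dist_sum_def by simp
qed

lemma Sobj_midpoint_less:
  assumes a: "a \<in> carrier_vec n" and b: "b \<in> carrier_vec n" and y: "y \<in> carrier_vec n"
    and rho: "\<rho> \<ge> 0" and ne: "a \<noteq> b"
  shows "2 * Sobj n \<rho> y (vec n (\<lambda>i. (a$i + b$i) / 2)) < Sobj n \<rho> y a + Sobj n \<rho> y b"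
proof -
  define m where "m = vec n (\<lambda>i. (a$i + b$i) / 2)"
  have mc: "m \<in> carrier_vec n" unfolding m_def by simp
  have mi: "m$i = (a$i + b$i) / 2" if "i < n" for i using that unfolding m_def by simp
  obtain k where k: "k < n" "a$k \<noteq> b$k" using ne a b by (metis carrier_vecD eq_vecI)
  have q: "2 * (\<Sum>i<n. (m$i - y$i)^2)
      = (\<Sum>i<n. (a$i - y$i)^2) + (\<Sum>i<n. (b$i - y$i)^2) - (\<Sum>i<n. (a$i - b$i)^2) / 2"
  proof -
    have "2 * (\<Sum>i<n. (m$i - y$i)^2) = (\<Sum>i<n. (a$i - y$i)^2 + (b$i - y$i)^2 - (a$i - b$i)^2 / 2)"
      unfolding sum_distrib_left by (intro sum.cong refl) (simp add: mi power2_eq_square field_simps)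
    then show ?thesis by (simp add: sum.distrib sum_subtractf sum_divide_distrib)
  qed
  have "0 < (a$k - b$k)^2" using k by simp
  also have "(a$k - b$k)^2 \<le> (\<Sum>i<n. (a$i - b$i)^2)" using k by (intro member_le_sum) auto
  finally have pos: "0 < (\<Sum>i<n. (a$i - b$i)^2)" .
  have "2 * \<bar>m$i - m$j\<bar> = \<bar>(a$i - a$j) + (b$i - b$j)\<bar>" if "i < n" "j < n" for i j
  proof -
    have e: "m$i - m$j = ((a$i - a$j) + (b$i - b$j)) / 2" using that by (simp add: mi field_simps)
    have "\<bar>m$i - m$j\<bar> = \<bar>(a$i - a$j) + (b$i - b$j)\<bar> / 2" unfolding e by simp
    then show ?thesis by simp
  qed
  then have "2 * pairwise_dist_sum n (\<lambda>i. m$i) = (\<Sum>j<n. \<Sum>i<j. \<bar>(a$i - a$j) + (b$i - b$j)\<bar>)"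
    unfolding pairwise_dist_sum_def sum_distrib_left by (intro sum.cong refl) auto
  also have "\<dots> \<le> (\<Sum>j<n. \<Sum>i<j. \<bar>a$i - a$j\<bar> + \<bar>b$i - b$j\<bar>)"
    by (intro sum_mono abs_triangle_ineq)
  also have "\<dots> = pairwise_dist_sum n (\<lambda>i. a$i) + pairwise_dist_sum n (\<lambda>i. b$i)"
    unfolding pairwise_dist_sum_def by (simp add: sum.distrib)
  finally have penalty: "2 * pairwise_dist_sum n (\<lambda>i. m$i)
      \<le> pairwise_dist_sum n (\<lambda>i. a$i) + pairwise_dist_sum n (\<lambda>i. b$i)" .
  show ?thesis
    unfolding m_def[symmetric] Sobj_eq[OF mc y] Sobj_eq[OF a y] Sobj_eq[OF b y]
    using q pos mult_left_mono[OF penalty rho] by (simp add: algebra_simps)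
qed

lemma Srho_eqI:
  assumes y: "y \<in> carrier_vec n" and rho: "\<rho> \<ge> 0" and x: "x \<in> carrier_vec n"
    and min: "\<forall>z\<in>carrier_vec n. Sobj n \<rho> y x \<le> Sobj n \<rho> y z"
  shows "Srho n \<rho> y = x"
  unfolding Srho_def
proof (rule the_equality)
  show "x \<in> carrier_vec n \<and> (\<forall>z\<in>carrier_vec n. Sobj n \<rho> y x \<le> Sobj n \<rho> y z)" using x min ..
  fix a assume a: "a \<in> carrier_vec n \<and> (\<forall>z\<in>carrier_vec n. Sobj n \<rho> y a \<le> Sobj n \<rho> y z)"
  show "a = x"
  proof (rule ccontr)
    let ?m = "vec n (\<lambda>i. (a$i + x$i) / 2)"
    assume "a \<noteq> x"
    then have "2 * Sobj n \<rho> y ?m < Sobj n \<rho> y a + Sobj n \<rho> y x"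
      using Sobj_midpoint_less[OF _ x y rho] a by blast
    moreover have "Sobj n \<rho> y a \<le> Sobj n \<rho> y ?m" "Sobj n \<rho> y x \<le> Sobj n \<rho> y ?m"
      using a min by auto
    ultimately show False by linarith
  qed
qed

lemma Sobj_permute:
  assumes s: "\<sigma> permutes {..<n}" and z: "z \<in> carrier_vec n" and y: "y \<in> carrier_vec n"
  shows "Sobj n \<rho> y z = (\<Sum>i<n. (z $ \<sigma> i - y $ \<sigma> i)^2) / 2 + \<rho> * pairwise_dist_sum n (\<lambda>i. z $ \<sigma> i)"
  unfolding Sobj_eq[OF z y] pairwise_dist_sum_permute[OF s]
    sum_permutes_lessThan[OF s, of "\<lambda>k. (z$k - y$k)^2"] ..

lemma half_sq_dist_plus_linear:
  fixes q s w :: "nat \<Rightarrow> real"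
  shows "(\<Sum>i<n. (q i - s i)^2) / 2 + \<rho> * (\<Sum>i<n. w i * q i)
       = (\<Sum>i<n. (q i - (s i - \<rho> * w i))^2) / 2
         + (\<rho> * (\<Sum>i<n. w i * s i) - \<rho>^2 * (\<Sum>i<n. (w i)^2) / 2)"
proof -
  have "(\<Sum>i<n. (q i - s i)^2 / 2 + \<rho> * (w i * q i))
      = (\<Sum>i<n. (q i - (s i - \<rho> * w i))^2 / 2 + (\<rho> * (w i * s i) - \<rho>^2 * (w i)^2 / 2))"
    by (intro sum.cong refl) (simp add: power2_eq_square field_simps)
  then show ?thesis
    by (simp add: sum.distrib sum_subtractf sum_distrib_left sum_divide_distrib)
qed

text \<open>For sorted data \<open>s\<close>, the projection of \<open>s - \<rho> w\<close> onto \<open>D\<close> minimises the objective of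
  \<open>S\<^sub>\<rho>\<close>: on \<open>D\<close> the penalty is \<open>\<rho> \<langle>w, \<cdot>\<rangle>\<close>, and by the rearrangement inequality sorting any
  competitor \<open>t\<close> does not increase the objective.\<close>
lemma projD_minimises_sorted_objective:
  fixes s t :: "nat \<Rightarrow> real"
  assumes s: "\<forall>i. Suc i < n \<longrightarrow> s (Suc i) \<le> s i"
    and v: "v \<in> carrier_vec n" and v_eq: "\<And>i. i < n \<Longrightarrow> v $ i = s i - \<rho> * wvec n $ i"
  shows "(\<Sum>i<n. (projD n v $ i - s i)^2) / 2 + \<rho> * pairwise_dist_sum n (\<lambda>i. projD n v $ i)
    \<le> (\<Sum>i<n. (t i - s i)^2) / 2 + \<rho> * pairwise_dist_sum n t"
proof -
  let ?x = "projD n v" and ?w = "\<lambda>i. wvec n $ i"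
  define C where "C = \<rho> * (\<Sum>i<n. ?w i * s i) - \<rho>^2 * (\<Sum>i<n. (?w i)^2) / 2"
  have shift: "(\<Sum>i<n. (q i - s i)^2) / 2 + \<rho> * (\<Sum>i<n. ?w i * q i) = (\<Sum>i<n. (q i - v$i)^2) / 2 + C"
    for q
  proof -
    have "(\<Sum>i<n. (q i - (s i - \<rho> * ?w i))^2) = (\<Sum>i<n. (q i - v$i)^2)"
      using v_eq by (intro sum.cong) auto
    then show ?thesis unfolding half_sq_dist_plus_linear C_def by simp
  qed
  have penalty: "pairwise_dist_sum n f = (\<Sum>i<n. ?w i * f i)"
    if "\<forall>i. Suc i < n \<longrightarrow> f (Suc i) \<le> f i" for f
    unfolding pairwise_dist_sum_antimono[OF that] by (intro sum.cong) (auto simp: wvec_nth)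
  obtain \<pi> where \<pi>: "\<pi> permutes {..<n}" "\<forall>i. Suc i < n \<longrightarrow> t (\<pi> (Suc i)) \<le> t (\<pi> i)"
    "(\<Sum>i<n. t i * s i) \<le> (\<Sum>i<n. t (\<pi> i) * s i)"
    using rearrangement_ineq[OF s, of t] by blast
  define r where "r = (\<lambda>i. t (\<pi> i))"
  have r_mono: "\<forall>i. Suc i < n \<longrightarrow> r (Suc i) \<le> r i" using \<pi>(2) unfolding r_def by simp
  have rD: "vec n r \<in> Dset n" unfolding Dset_iff using r_mono by simp
  have sorting_closer: "(\<Sum>i<n. (r i - s i)^2) \<le> (\<Sum>i<n. (t i - s i)^2)"
    unfolding r_def by (rule sum_sq_dist_le_if_rearranged[OF \<pi>(1,3)])
  have "(\<Sum>i<n. (?x$i - v$i)^2) \<le> (\<Sum>i<n. (vec n r $ i - v$i)^2)"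
    using kkt_Dset_pythagoras[OF kkt_Dset_projD[OF v] rD] sum_nonneg[of "{..<n}" "\<lambda>i. (vec n r $ i - ?x$i)^2"]
    by simp
  also have "\<dots> = (\<Sum>i<n. (r i - v$i)^2)" by (intro sum.cong) auto
  finally have proj_closer: "(\<Sum>i<n. (?x$i - v$i)^2) \<le> (\<Sum>i<n. (r i - v$i)^2)" .
  have x_mono: "\<forall>i. Suc i < n \<longrightarrow> ?x $ Suc i \<le> ?x $ i" using Dset_antimono[OF projD_in_Dset[OF v]] by simp
  have "(\<Sum>i<n. (?x$i - s i)^2) / 2 + \<rho> * pairwise_dist_sum n (\<lambda>i. ?x$i)
      = (\<Sum>i<n. (?x$i - v$i)^2) / 2 + C" unfolding penalty[OF x_mono] shift ..
  also have "\<dots> \<le> (\<Sum>i<n. (r i - v$i)^2) / 2 + C" using proj_closer by simp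
  also have "\<dots> = (\<Sum>i<n. (r i - s i)^2) / 2 + \<rho> * pairwise_dist_sum n r"
    unfolding penalty[OF r_mono] shift ..
  also have "pairwise_dist_sum n r = pairwise_dist_sum n t"
    unfolding r_def by (rule pairwise_dist_sum_permute[OF \<pi>(1)])
  also have "(\<Sum>i<n. (r i - s i)^2) / 2 + \<rho> * pairwise_dist_sum n t
      \<le> (\<Sum>i<n. (t i - s i)^2) / 2 + \<rho> * pairwise_dist_sum n t" using sorting_closer by simp
  finally show ?thesis .
qed

lemma Srho_eq_projD:
  assumes s: "\<sigma> permutes {..<n}" and y: "y \<in> carrier_vec n"
    and sorted: "pmat n \<sigma> *\<^sub>v y \<in> Dset n" and rho: "\<rho> \<ge> 0"
  shows "Srho n \<rho> y = transpose_mat (pmat n \<sigma>) *\<^sub>v projD n (pmat n \<sigma> *\<^sub>v y - \<rho> \<cdot>\<^sub>v wvec n)"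
proof (rule Srho_eqI[OF y rho])
  let ?v = "pmat n \<sigma> *\<^sub>v y - \<rho> \<cdot>\<^sub>v wvec n"
  let ?x = "projD n ?v" and ?s = "\<lambda>i. y $ \<sigma> i"
  have v: "?v \<in> carrier_vec n" by (rule carrier_vecI) simp
  have v_eq: "?v $ i = ?s i - \<rho> * wvec n $ i" if "i < n" for i
    using that pmat_mult_vec_nth[OF s y that] by simp
  have s_mono: "\<forall>i. Suc i < n \<longrightarrow> ?s (Suc i) \<le> ?s i"
    using Dset_antimono[OF sorted] pmat_mult_vec_nth[OF s y] by simp
  let ?xh = "transpose_mat (pmat n \<sigma>) *\<^sub>v ?x"
  show xh: "?xh \<in> carrier_vec n" by (rule carrier_vecI) simp
  have xh_nth: "?xh $ \<sigma> i = ?x $ i" if "i < n" for i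
    using transpose_pmat_mult_vec_nth[OF s projD_carrier[OF v], of "\<sigma> i"] that
      permutes_in_image[OF s] permutes_inverses(2)[OF s] by simp
  have "(\<Sum>i<n. (?xh $ \<sigma> i - ?s i)^2) = (\<Sum>i<n. (?x $ i - ?s i)^2)"
    using xh_nth by (intro sum.cong) auto
  moreover have "pairwise_dist_sum n (\<lambda>i. ?xh $ \<sigma> i) = pairwise_dist_sum n (\<lambda>i. ?x $ i)"
    using xh_nth by (intro pairwise_dist_sum_cong) auto
  ultimately have "Sobj n \<rho> y ?xh
      = (\<Sum>i<n. (?x $ i - ?s i)^2) / 2 + \<rho> * pairwise_dist_sum n (\<lambda>i. ?x $ i)"
    unfolding Sobj_permute[OF s xh y] by simp
  also have "\<dots> \<le> Sobj n \<rho> y z" if "z \<in> carrier_vec n" for z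
    unfolding Sobj_permute[OF s that y] by (rule projD_minimises_sorted_objective[OF s_mono v v_eq])
  finally show "\<forall>z\<in>carrier_vec n. Sobj n \<rho> y ?xh \<le> Sobj n \<rho> y z" by blast
qed

section \<open>Invariance under the choice of sorting permutation\<close>

text \<open>A tie \<open>s\<^sub>c = s\<^sub>c\<^sub>+\<^sub>1\<close> in sorted data forces a nonzero multiplier at \<open>c\<close>: otherwise
  \<open>v\<^sub>c\<^sub>+\<^sub>1 \<le> \<Pi>\<^sub>D(v)\<^sub>c\<^sub>+\<^sub>1 \<le> \<Pi>\<^sub>D(v)\<^sub>c \<le> v\<^sub>c\<close>, whereas \<open>v = s - \<rho> w\<close> has \<open>v\<^sub>c\<^sub>+\<^sub>1 - v\<^sub>c = 2\<rho> > 0\<close>.\<close>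
lemma lamD_nonzero_at_tie:
  assumes s: "s \<in> Dset n" and rho: "\<rho> > 0" and c: "Suc c < n" and tie: "s$c = s$Suc c"
  shows "lamD n (s - \<rho> \<cdot>\<^sub>v wvec n) $ c \<noteq> 0"
proof
  let ?v = "s - \<rho> \<cdot>\<^sub>v wvec n"
  let ?x = "projD n ?v" and ?S = "\<lambda>k. \<Sum>j<Suc k. ?v$j - projD n ?v $ j"
  have v: "?v \<in> carrier_vec n" using Dset_carrier[OF s] by simp
  have kkt: "isotonic_kkt n (\<lambda>j. ?v $ j) (\<lambda>j. ?x $ j)"
    using kkt_Dset_projD[OF v] unfolding kkt_Dset_def by (rule conjunct2)
  then have S_nonpos: "?S k \<le> 0" if "k < n" for k using that unfolding isotonic_kkt_def by blast
  assume "lamD n ?v $ c = 0"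
  then have S0: "?S c = 0" using c lamD_nth[of c n ?v] by simp
  have "?v$c - ?x$c \<ge> 0"
  proof (cases c)
    case (Suc c')
    then have "?S c = ?S c' + (?v$c - ?x$c)" by simp
    then show ?thesis using S0 S_nonpos[of c'] c Suc by simp
  qed (use S0 in simp)
  moreover have "?S (Suc c) = ?S c + (?v$Suc c - ?x$Suc c)" by simp
  then have "?v$Suc c - ?x$Suc c \<le> 0" using S0 S_nonpos[OF c] by simp
  moreover have "?x$Suc c \<le> ?x$c" using Dset_antimono[OF projD_in_Dset[OF v] c] .
  moreover have "?v$Suc c - ?v$c = 2 * \<rho>"
    using c tie Dset_carrier[OF s] by (simp add: wvec_nth algebra_simps)
  ultimately show False using rho by simp
qed

lemma eq_if_constant_on_ties:
  fixes s t :: "nat \<Rightarrow> real"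
  assumes s: "\<forall>i. Suc i < n \<longrightarrow> s (Suc i) \<le> s i"
    and ties: "\<forall>c. Suc c < n \<longrightarrow> s c = s (Suc c) \<longrightarrow> t c = t (Suc c)"
    and "a < n" and "b < n" and "s a = s b"
  shows "t a = t b"
proof -
  have chain: "t a = t b" if "a \<le> b" "b < n" "s a = s b" for a b
    using that
  proof (induction b)
    case (Suc b)
    show ?case
    proof (cases "a = Suc b")
      case False
      then have ab: "a \<le> b" and b: "b < n" using Suc.prems by auto
      have "s (Suc b) \<le> s b" using s Suc.prems(2) by blast
      moreover have "s b \<le> s a" using antimono_upto_le[OF s ab b] .
      ultimately have "s a = s b" "s b = s (Suc b)" using Suc.prems(3) by linarith+
      then have "t a = t b" "t b = t (Suc b)" using Suc.IH[OF ab b] ties Suc.prems(2) by blast+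
      then show ?thesis by simp
    qed simp
  qed simp
  show ?thesis
  proof (cases "a \<le> b")
    case True
    then show ?thesis using chain assms(4,5) by blast
  next
    case False
    then show ?thesis using chain[of b a] assms(3,5) by simp
  qed
qed

lemma sorting_perms_agree:
  fixes f :: "nat \<Rightarrow> real"
  assumes \<sigma>: "\<sigma> permutes {..<n}" and \<tau>: "\<tau> permutes {..<n}"
    and \<sigma>_sorts: "\<forall>i. Suc i < n \<longrightarrow> f (\<sigma> (Suc i)) \<le> f (\<sigma> i)"
    and \<tau>_sorts: "\<forall>i. Suc i < n \<longrightarrow> f (\<tau> (Suc i)) \<le> f (\<tau> i)"
    and i: "i < n"
  shows "f (\<sigma> i) = f (\<tau> i)"
proof -
  define L where "L p = map (\<lambda>k. - f k) (map p [0..<n])" for p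
  have sorted: "sorted (L p)" if "\<forall>i. Suc i < n \<longrightarrow> f (p (Suc i)) \<le> f (p i)" for p
    unfolding sorted_iff_nth_mono L_def using antimono_upto_le[OF that] by auto
  have mset_perm: "mset (map p [0..<n]) = mset [0..<n]" if "p permutes {..<n}" for p
  proof -
    have "distinct (map p [0..<n])"
      using permutes_inj_on[OF that] by (simp add: distinct_map inj_on_subset)
    moreover have "set (map p [0..<n]) = set [0..<n]"
      using permutes_image[OF that] by (simp add: atLeast0LessThan)
    ultimately show ?thesis using set_eq_iff_mset_eq_distinct[of "map p [0..<n]" "[0..<n]"] by simp
  qed
  have "mset (L \<sigma>) = mset (L \<tau>)" unfolding L_def using mset_perm[OF \<sigma>] mset_perm[OF \<tau>] by (metis mset_map)
  then have "sort (L \<tau>) = L \<sigma>" using properties_for_sort sorted[OF \<sigma>_sorts] by blast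
  moreover have "sort (L \<tau>) = L \<tau>" using sorted_sort_id sorted[OF \<tau>_sorts] by blast
  ultimately have "L \<sigma> ! i = L \<tau> ! i" by simp
  then show ?thesis unfolding L_def using i by simp
qed

lemma mat_eq_if_mult_vec_eq:
  fixes A B :: "'a :: comm_ring_1 mat"
  assumes A: "A \<in> carrier_mat n n" and B: "B \<in> carrier_mat n n"
    and eq: "\<And>z. z \<in> carrier_vec n \<Longrightarrow> A *\<^sub>v z = B *\<^sub>v z"
  shows "A = B"
proof (rule eq_matI)
  fix i j assume "i < dim_row B" "j < dim_col B"
  then have i: "i < n" and j: "j < n" using B by auto
  have col: "(M *\<^sub>v unit_vec n j) $ i = M $$ (i, j)" if M: "M \<in> carrier_mat n n" for M :: "'a mat"
  proof -
    have "(M *\<^sub>v unit_vec n j) $ i = (\<Sum>k\<in>{0..<n}. M $$ (i,k) * unit_vec n j $ k)"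
      using M i by (simp add: scalar_prod_def row_def)
    also have "\<dots> = (\<Sum>k\<in>{0..<n}. if k = j then M $$ (i,k) else 0)"
      by (intro sum.cong refl) (auto simp: unit_vec_def)
    finally show ?thesis using j by simp
  qed
  show "A $$ (i, j) = B $$ (i, j)" using col[OF A] col[OF B] eq[of "unit_vec n j"] by simp
qed (use A B in auto)

lemma transpose_pmat_mult_vec_eq_if_constant_on_ties:
  assumes \<sigma>: "\<sigma> permutes {..<n}" and \<tau>: "\<tau> permutes {..<n}" and y: "y \<in> carrier_vec n"
    and same: "\<forall>i<n. y $ \<sigma> i = y $ \<tau> i" and sorted: "pmat n \<sigma> *\<^sub>v y \<in> Dset n"
    and q: "q \<in> carrier_vec n"
    and q_ties: "\<forall>c. Suc c < n \<longrightarrow> y $ \<sigma> c = y $ \<sigma> (Suc c) \<longrightarrow> q$c = q$Suc c"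
  shows "transpose_mat (pmat n \<tau>) *\<^sub>v q = transpose_mat (pmat n \<sigma>) *\<^sub>v q"
proof (rule eq_vecI)
  fix k assume "k < dim_vec (transpose_mat (pmat n \<sigma>) *\<^sub>v q)"
  then have k: "k < n" by simp
  let ?a = "Hilbert_Choice.inv \<tau> k" and ?b = "Hilbert_Choice.inv \<sigma> k"
  have a: "?a < n" and b: "?b < n"
    using permutes_in_image[OF permutes_inv[OF \<tau>]] permutes_in_image[OF permutes_inv[OF \<sigma>]] k by auto
  have "y $ \<sigma> ?a = y $ \<sigma> ?b"
    using same a permutes_inverses(1)[OF \<tau>] permutes_inverses(1)[OF \<sigma>] by simp
  moreover have "\<forall>i. Suc i < n \<longrightarrow> y $ \<sigma> (Suc i) \<le> y $ \<sigma> i"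
    using Dset_antimono[OF sorted] pmat_mult_vec_nth[OF \<sigma> y] by simp
  ultimately have "q $ ?a = q $ ?b" using eq_if_constant_on_ties[OF _ q_ties a b] by blast
  then show "(transpose_mat (pmat n \<tau>) *\<^sub>v q) $ k = (transpose_mat (pmat n \<sigma>) *\<^sub>v q) $ k"
    using transpose_pmat_mult_vec_nth[OF \<tau> q k] transpose_pmat_mult_vec_nth[OF \<sigma> q k] by simp
qed simp

lemma QK_mult_vec_eq_if_orthogonal_diff:
  assumes K: "K \<subseteq> {..<n - 1}" and a: "a \<in> carrier_vec n" and b: "b \<in> carrier_vec n"
    and orth: "\<forall>t\<in>carrier_vec n. (\<forall>i\<in>K. t$i = t$Suc i) \<longrightarrow> (a - b) \<bullet> t = 0"
  shows "QK n K *\<^sub>v a = QK n K *\<^sub>v b"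
proof -
  have Q: "QK n K \<in> carrier_mat n n" using QK_carrier[OF K] .
  have "QK n K *\<^sub>v a - QK n K *\<^sub>v b = QK n K *\<^sub>v (a - b)"
    using mult_minus_distrib_mat_vec[OF Q a b] by simp
  also have "\<dots> = 0\<^sub>v n" using QK_mult_vec_eq_0_if_orthogonal[OF K _ orth] a b by simp
  finally show ?thesis using vec_minus_eq_0_iff Q a b by (metis mult_mat_vec_carrier)
qed

lemma conj_mult_vec:
  assumes "M \<in> carrier_mat n n" and "Q \<in> carrier_mat n n" and "z \<in> carrier_vec n"
  shows "(transpose_mat M * Q * M) *\<^sub>v z = transpose_mat M *\<^sub>v (Q *\<^sub>v (M *\<^sub>v z))"
  using assms by (simp add: assoc_mult_mat_vec[of _ n n _ n])

text \<open>Two sorting permutations of \<open>y\<close> differ only inside blocks of ties of \<open>y\<close>. By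
  \<open>lamD_nonzero_at_tie\<close> every such tie lies in \<open>K\<close>, and vectors constant on \<open>K\<close>, such as the
  range of \<open>Q\<^sub>K\<close>, cannot tell the two permutations apart.\<close>
lemma conj_QK_eq:
  assumes \<sigma>: "\<sigma> permutes {..<n}" and \<tau>: "\<tau> permutes {..<n}" and y: "y \<in> carrier_vec n"
    and same: "\<forall>i<n. y $ \<sigma> i = y $ \<tau> i" and sorted: "pmat n \<sigma> *\<^sub>v y \<in> Dset n"
    and rho: "\<rho> > 0" and K: "K \<in> KD n (pmat n \<sigma> *\<^sub>v y - \<rho> \<cdot>\<^sub>v wvec n)"
  shows "transpose_mat (pmat n \<tau>) * QK n K * pmat n \<tau> = transpose_mat (pmat n \<sigma>) * QK n K * pmat n \<sigma>"
proof -
  let ?v = "pmat n \<sigma> *\<^sub>v y - \<rho> \<cdot>\<^sub>v wvec n"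
  have v: "?v \<in> carrier_vec n" by (rule carrier_vecI) simp
  have Kn: "K \<subseteq> {..<n - 1}" using KD_subset[OF v K] .
  have Q: "QK n K \<in> carrier_mat n n" using QK_carrier[OF Kn] .
  have ties_in_K: "c \<in> K" if "Suc c < n" "y $ \<sigma> c = y $ \<sigma> (Suc c)" for c
  proof -
    have "lamD n ?v $ c \<noteq> 0"
      using lamD_nonzero_at_tie[OF sorted rho] that pmat_mult_vec_nth[OF \<sigma> y] by simp
    then show ?thesis using K that unfolding KD_eq[OF v] vsupp_def by auto
  qed
  have transpose_eq: "transpose_mat (pmat n \<tau>) *\<^sub>v q = transpose_mat (pmat n \<sigma>) *\<^sub>v q"
    if "q \<in> carrier_vec n" "\<forall>i\<in>K. q$i = q$Suc i" for q
    using that ties_in_K by (intro transpose_pmat_mult_vec_eq_if_constant_on_ties[OF \<sigma> \<tau> y same sorted]) auto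
  show ?thesis
  proof (rule mat_eq_if_mult_vec_eq)
    fix z :: "real vec" assume z: "z \<in> carrier_vec n"
    let ?a = "pmat n \<tau> *\<^sub>v z" and ?b = "pmat n \<sigma> *\<^sub>v z"
    have ab: "?a \<in> carrier_vec n" "?b \<in> carrier_vec n" by (rule carrier_vecI, simp)+
    have "(?a - ?b) \<bullet> t = 0" if t: "t \<in> carrier_vec n" "\<forall>i\<in>K. t$i = t$Suc i" for t
    proof -
      have "?a \<bullet> t = (transpose_mat (pmat n \<tau>) *\<^sub>v t) \<bullet> z" "?b \<bullet> t = (transpose_mat (pmat n \<sigma>) *\<^sub>v t) \<bullet> z"
        using transpose_vec_mult_scalar[OF pmat_carrier z t(1)] comm_scalar_prod[OF _ t(1)] ab by auto
      then show ?thesis using minus_scalar_prod_distrib[OF ab t(1)] transpose_eq[OF t] by simp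
    qed
    then have Qab: "QK n K *\<^sub>v ?a = QK n K *\<^sub>v ?b" using QK_mult_vec_eq_if_orthogonal_diff[OF Kn ab] by blast
    have Qa: "QK n K *\<^sub>v ?a \<in> carrier_vec n" using mult_mat_vec_carrier[OF Q ab(1)] .
    have "\<forall>i\<in>K. (QK n K *\<^sub>v ?a)$i = (QK n K *\<^sub>v ?a)$Suc i"
      using BK_mult_QK_mult_vec[OF Kn ab(1)] BK_mult_vec_eq_0_iff[OF Kn Qa] by simp
    then have "transpose_mat (pmat n \<tau>) *\<^sub>v (QK n K *\<^sub>v ?a) = transpose_mat (pmat n \<sigma>) *\<^sub>v (QK n K *\<^sub>v ?b)"
      using transpose_eq[OF Qa] Qab by simp
    then show "(transpose_mat (pmat n \<tau>) * QK n K * pmat n \<tau>) *\<^sub>v z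
        = (transpose_mat (pmat n \<sigma>) * QK n K * pmat n \<sigma>) *\<^sub>v z"
      unfolding conj_mult_vec[OF pmat_carrier Q z] .
  qed (use Q in auto)
qed

text \<open>Near \<open>y\<close>, a permutation sorting \<open>u\<close> also sorts \<open>y\<close>: the entries of \<open>y\<close> that differ are
  separated by a gap that small perturbations cannot close.\<close>
lemma sorting_perm_locally_stable:
  assumes \<sigma>: "\<sigma> permutes {..<n}" and y: "y \<in> carrier_vec n" and sorted: "pmat n \<sigma> *\<^sub>v y \<in> Dset n"
  shows "\<exists>\<delta>>0. \<forall>u\<in>carrier_vec n. vnorm (u - y) < \<delta> \<longrightarrow>
    (\<forall>\<tau>. \<tau> permutes {..<n} \<longrightarrow> pmat n \<tau> *\<^sub>v u \<in> Dset n \<longrightarrow> pmat n \<tau> *\<^sub>v y = pmat n \<sigma> *\<^sub>v y)"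
proof -
  define gap where "gap = (\<lambda>(i, j). if y$i = y$j then 1 else \<bar>y$i - y$j\<bar> / 2)"
  have "0 < gap ij" for ij unfolding gap_def by (auto split: prod.split)
  then obtain \<delta> where \<delta>: "\<delta> > 0" "\<forall>ij\<in>{..<n} \<times> {..<n}. \<delta> \<le> gap ij"
    using exists_pos_lower_bound[of "{..<n} \<times> {..<n}" gap] by blast
  show ?thesis
  proof (intro exI[of _ \<delta>] conjI \<delta>(1) ballI impI allI)
    fix u \<tau> assume u: "u \<in> carrier_vec n" and close: "vnorm (u - y) < \<delta>"
      and \<tau>: "\<tau> permutes {..<n}" and u_sorted: "pmat n \<tau> *\<^sub>v u \<in> Dset n"
    have \<tau>_sorts: "\<forall>i. Suc i < n \<longrightarrow> y $ \<tau> (Suc i) \<le> y $ \<tau> i"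
    proof (intro allI impI)
      fix i assume i: "Suc i < n"
      let ?a = "\<tau> i" and ?b = "\<tau> (Suc i)"
      have ab: "?a < n" "?b < n" using permutes_in_image[OF \<tau>] i by auto
      have "u $ ?b \<le> u $ ?a"
        using Dset_antimono[OF u_sorted i] pmat_mult_vec_nth[OF \<tau> u] i by simp
      moreover have "\<bar>u$k - y$k\<bar> < \<delta>" if "k < n" for k
        using abs_nth_minus_le_vnorm[OF u y that] close by simp
      moreover have "\<delta> \<le> gap (?a, ?b)" using \<delta>(2) ab by simp
      then have "2 * \<delta> \<le> \<bar>y $ ?a - y $ ?b\<bar>" if "y $ ?a \<noteq> y $ ?b"
        using that unfolding gap_def by simp
      ultimately show "y $ ?b \<le> y $ ?a" using ab(1) ab(2) by (smt (verit))
    qed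
    have \<sigma>_sorts: "\<forall>i. Suc i < n \<longrightarrow> y $ \<sigma> (Suc i) \<le> y $ \<sigma> i"
      using Dset_antimono[OF sorted] pmat_mult_vec_nth[OF \<sigma> y] by simp
    show "pmat n \<tau> *\<^sub>v y = pmat n \<sigma> *\<^sub>v y"
      using sorting_perms_agree[OF \<tau> \<sigma> \<tau>_sorts \<sigma>_sorts] pmat_mult_vec_nth[OF \<tau> y]
        pmat_mult_vec_nth[OF \<sigma> y] by (intro eq_vecI) auto
  qed
qed

section \<open>The local behaviour of \<open>\<Pi>\<^sub>D\<close> and \<open>S\<^sub>\<rho>\<close>\<close>

lemma pmat_shift:
  assumes \<tau>: "\<tau> permutes {..<n}" and u: "u \<in> carrier_vec n" and y: "y \<in> carrier_vec n"
    and c: "c \<in> carrier_vec n"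
  shows "(pmat n \<tau> *\<^sub>v u - c) - (pmat n \<tau> *\<^sub>v y - c) = pmat n \<tau> *\<^sub>v (u - y)"
    and "vnorm ((pmat n \<tau> *\<^sub>v u - c) - (pmat n \<tau> *\<^sub>v y - c)) = vnorm (u - y)"
proof -
  have "pmat n \<tau> *\<^sub>v (u - y) = pmat n \<tau> *\<^sub>v u - pmat n \<tau> *\<^sub>v y"
    by (rule mult_minus_distrib_mat_vec[OF pmat_carrier u y])
  then show shift: "(pmat n \<tau> *\<^sub>v u - c) - (pmat n \<tau> *\<^sub>v y - c) = pmat n \<tau> *\<^sub>v (u - y)"
    using u y c by (auto simp: vec_eq_iff)
  show "vnorm ((pmat n \<tau> *\<^sub>v u - c) - (pmat n \<tau> *\<^sub>v y - c)) = vnorm (u - y)"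
    unfolding shift using vnorm_pmat_mult_vec[OF \<tau>] u y by simp
qed

lemma transpose_mat_mult_affine:
  assumes M: "M \<in> carrier_mat n n" and Q: "Q \<in> carrier_mat n n"
    and x: "x \<in> carrier_vec n" and d: "d \<in> carrier_vec n"
  shows "transpose_mat M *\<^sub>v (x + Q *\<^sub>v (M *\<^sub>v d))
    = transpose_mat M *\<^sub>v x + (transpose_mat M * Q * M) *\<^sub>v d"
proof -
  have "transpose_mat M \<in> carrier_mat n n" "Q *\<^sub>v (M *\<^sub>v d) \<in> carrier_vec n" using M Q d by auto
  then show ?thesis
    unfolding conj_mult_vec[OF M Q d] by (rule mult_add_distrib_mat_vec[OF _ x])
qed

lemma perm_projD_locally_affine:
  assumes y: "y \<in> carrier_vec n" and c: "c \<in> carrier_vec n" and \<sigma>: "\<sigma> permutes {..<n}"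
  shows "\<exists>\<delta>>0. \<forall>u\<in>carrier_vec n. vnorm (u - y) < \<delta> \<longrightarrow>
    (\<forall>\<pi>. \<pi> permutes {..<n} \<longrightarrow> pmat n \<pi> *\<^sub>v y = pmat n \<sigma> *\<^sub>v y \<longrightarrow>
      KD n (pmat n \<pi> *\<^sub>v u - c) \<subseteq> KD n (pmat n \<sigma> *\<^sub>v y - c)
      \<and> (\<forall>K\<in>KD n (pmat n \<pi> *\<^sub>v u - c). projD n (pmat n \<pi> *\<^sub>v u - c)
            = projD n (pmat n \<sigma> *\<^sub>v y - c) + QK n K *\<^sub>v (pmat n \<pi> *\<^sub>v (u - y))))"
proof -
  have v: "pmat n \<sigma> *\<^sub>v y - c \<in> carrier_vec n" using c by (intro carrier_vecI) simp
  obtain \<delta> where \<delta>: "\<delta> > 0" and affine: "\<forall>v'\<in>carrier_vec n. vnorm (v' - (pmat n \<sigma> *\<^sub>v y - c)) < \<delta> \<longrightarrow>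
      KD n v' \<subseteq> KD n (pmat n \<sigma> *\<^sub>v y - c)
      \<and> (\<forall>K\<in>KD n v'. projD n v' = projD n (pmat n \<sigma> *\<^sub>v y - c) + QK n K *\<^sub>v (v' - (pmat n \<sigma> *\<^sub>v y - c)))"
    using projD_locally_affine[OF v] by blast
  show ?thesis
  proof (intro exI[of _ \<delta>] conjI[OF \<delta>] ballI impI allI)
    fix u \<pi> assume u: "u \<in> carrier_vec n" and close: "vnorm (u - y) < \<delta>"
      and \<pi>: "\<pi> permutes {..<n}" and same: "pmat n \<pi> *\<^sub>v y = pmat n \<sigma> *\<^sub>v y"
    have v': "pmat n \<pi> *\<^sub>v u - c \<in> carrier_vec n" using c by (intro carrier_vecI) simp
    have shift: "(pmat n \<pi> *\<^sub>v u - c) - (pmat n \<sigma> *\<^sub>v y - c) = pmat n \<pi> *\<^sub>v (u - y)"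
      using pmat_shift(1)[OF \<pi> u y c] unfolding same .
    have close': "vnorm ((pmat n \<pi> *\<^sub>v u - c) - (pmat n \<sigma> *\<^sub>v y - c)) < \<delta>"
      using pmat_shift(2)[OF \<pi> u y c] close unfolding same by simp
    show "KD n (pmat n \<pi> *\<^sub>v u - c) \<subseteq> KD n (pmat n \<sigma> *\<^sub>v y - c)
      \<and> (\<forall>K\<in>KD n (pmat n \<pi> *\<^sub>v u - c). projD n (pmat n \<pi> *\<^sub>v u - c)
            = projD n (pmat n \<sigma> *\<^sub>v y - c) + QK n K *\<^sub>v (pmat n \<pi> *\<^sub>v (u - y)))"
      using affine[rule_format, OF v' close'] unfolding shift .
  qed
qed

lemma QS_subset_and_Srho_affine:
  assumes P: "\<forall>u \<in> carrier_vec n. perm_matrix n (P u) \<and> P u *\<^sub>v u \<in> Dset n"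
    and rho: "\<rho> > 0" and y: "y \<in> carrier_vec n" and u: "u \<in> carrier_vec n"
    and same: "P u *\<^sub>v y = P y *\<^sub>v y"
    and KD_sub: "KD n (P u *\<^sub>v u - \<rho> \<cdot>\<^sub>v wvec n) \<subseteq> KD n (P y *\<^sub>v y - \<rho> \<cdot>\<^sub>v wvec n)"
    and affine: "\<forall>K\<in>KD n (P u *\<^sub>v u - \<rho> \<cdot>\<^sub>v wvec n). projD n (P u *\<^sub>v u - \<rho> \<cdot>\<^sub>v wvec n)
      = projD n (P y *\<^sub>v y - \<rho> \<cdot>\<^sub>v wvec n) + QK n K *\<^sub>v (P u *\<^sub>v (u - y))"
  shows "QS n \<rho> P u \<subseteq> QS n \<rho> P y \<and> (\<forall>Q\<in>QS n \<rho> P u. Srho n \<rho> u = Srho n \<rho> y + Q *\<^sub>v (u - y))"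
proof -
  obtain \<sigma> where \<sigma>: "\<sigma> permutes {..<n}" "P y = pmat n \<sigma>" using P y perm_matrix_pmat by blast
  obtain \<tau> where \<tau>: "\<tau> permutes {..<n}" "P u = pmat n \<tau>" using P u perm_matrix_pmat by blast
  have y_sorted: "pmat n \<sigma> *\<^sub>v y \<in> Dset n" and u_sorted: "pmat n \<tau> *\<^sub>v u \<in> Dset n"
    using P y u \<sigma> \<tau> by auto
  have same': "\<forall>i<n. y $ \<sigma> i = y $ \<tau> i"
    using same \<sigma> \<tau> pmat_mult_vec_nth[OF \<sigma>(1) y] pmat_mult_vec_nth[OF \<tau>(1) y] by (metis vec_eq_iff)
  have Srho_u: "Srho n \<rho> u = transpose_mat (P u) *\<^sub>v projD n (P u *\<^sub>v u - \<rho> \<cdot>\<^sub>v wvec n)"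
    unfolding \<tau>(2) using Srho_eq_projD[OF \<tau>(1) u u_sorted] rho by simp
  have Srho_y: "Srho n \<rho> y = transpose_mat (P u) *\<^sub>v projD n (P y *\<^sub>v y - \<rho> \<cdot>\<^sub>v wvec n)"
    unfolding same[symmetric] \<tau>(2) using Srho_eq_projD[OF \<tau>(1) y] y_sorted same \<sigma>(2) \<tau>(2) rho by simp
  have QS_u: "\<exists>K\<in>KD n (P u *\<^sub>v u - \<rho> \<cdot>\<^sub>v wvec n). Q = transpose_mat (P u) * QK n K * P u"
    if "Q \<in> QS n \<rho> P u" for Q
    using that unfolding QS_def QD_eq by blast
  have "Q \<in> QS n \<rho> P y" if Q: "Q \<in> QS n \<rho> P u" for Q
  proof -
    obtain K where K: "K \<in> KD n (P y *\<^sub>v y - \<rho> \<cdot>\<^sub>v wvec n)" and "Q = transpose_mat (P u) * QK n K * P u"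
      using QS_u[OF Q] KD_sub by blast
    then have "Q = transpose_mat (P y) * QK n K * P y"
      unfolding \<sigma>(2) \<tau>(2) using conj_QK_eq[OF \<sigma>(1) \<tau>(1) y same' y_sorted rho] \<sigma>(2) by simp
    then show ?thesis using K unfolding QS_def QD_eq by blast
  qed
  moreover have "Srho n \<rho> u = Srho n \<rho> y + Q *\<^sub>v (u - y)" if Q: "Q \<in> QS n \<rho> P u" for Q
  proof -
    obtain K where K: "K \<in> KD n (P u *\<^sub>v u - \<rho> \<cdot>\<^sub>v wvec n)" and Q_eq: "Q = transpose_mat (P u) * QK n K * P u"
      using QS_u[OF Q] by blast
    have "P u *\<^sub>v u - \<rho> \<cdot>\<^sub>v wvec n \<in> carrier_vec n" unfolding \<tau>(2) by (rule carrier_vecI) simp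
    then have "QK n K \<in> carrier_mat n n" using KD_subset[OF _ K] QK_carrier by blast
    moreover have "projD n (P y *\<^sub>v y - \<rho> \<cdot>\<^sub>v wvec n) \<in> carrier_vec n"
      unfolding \<sigma>(2) by (intro projD_carrier carrier_vecI) simp
    moreover have "P u \<in> carrier_mat n n" "u - y \<in> carrier_vec n" using \<tau>(2) u y by auto
    ultimately show ?thesis
      unfolding Srho_u Srho_y affine[rule_format, OF K] Q_eq by (intro transpose_mat_mult_affine)
  qed
  ultimately show ?thesis by blast
qed

lemma sorting_perms_projD_locally_affine:
  assumes P: "\<forall>u \<in> carrier_vec n. perm_matrix n (P u) \<and> P u *\<^sub>v u \<in> Dset n"
    and y: "y \<in> carrier_vec n" and c: "c \<in> carrier_vec n"
  shows "\<exists>\<delta>>0. \<forall>u\<in>carrier_vec n. vnorm (u - y) < \<delta> \<longrightarrow> P u *\<^sub>v y = P y *\<^sub>v y \<and>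
    (\<forall>M\<in>{P y, P u}. KD n (M *\<^sub>v u - c) \<subseteq> KD n (P y *\<^sub>v y - c)
      \<and> (\<forall>K\<in>KD n (M *\<^sub>v u - c). projD n (M *\<^sub>v u - c) = projD n (P y *\<^sub>v y - c) + QK n K *\<^sub>v (M *\<^sub>v (u - y))))"
proof -
  obtain \<sigma> where \<sigma>: "\<sigma> permutes {..<n}" "P y = pmat n \<sigma>" using P y perm_matrix_pmat by blast
  have "pmat n \<sigma> *\<^sub>v y \<in> Dset n" using P y \<sigma>(2) by auto
  then obtain \<delta>2 where \<delta>2: "\<delta>2 > 0" and stable: "\<forall>u\<in>carrier_vec n. vnorm (u - y) < \<delta>2 \<longrightarrow>
      (\<forall>\<tau>. \<tau> permutes {..<n} \<longrightarrow> pmat n \<tau> *\<^sub>v u \<in> Dset n \<longrightarrow> pmat n \<tau> *\<^sub>v y = pmat n \<sigma> *\<^sub>v y)"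
    using sorting_perm_locally_stable[OF \<sigma>(1) y] by blast
  obtain \<delta>1 where \<delta>1: "\<delta>1 > 0" and affine: "\<forall>u\<in>carrier_vec n. vnorm (u - y) < \<delta>1 \<longrightarrow>
      (\<forall>\<pi>. \<pi> permutes {..<n} \<longrightarrow> pmat n \<pi> *\<^sub>v y = pmat n \<sigma> *\<^sub>v y \<longrightarrow>
        KD n (pmat n \<pi> *\<^sub>v u - c) \<subseteq> KD n (P y *\<^sub>v y - c)
        \<and> (\<forall>K\<in>KD n (pmat n \<pi> *\<^sub>v u - c). projD n (pmat n \<pi> *\<^sub>v u - c)
              = projD n (P y *\<^sub>v y - c) + QK n K *\<^sub>v (pmat n \<pi> *\<^sub>v (u - y))))"
    using perm_projD_locally_affine[OF y c \<sigma>(1)] unfolding \<sigma>(2) by blast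
  show ?thesis
  proof (intro exI[of _ "min \<delta>1 \<delta>2"] conjI[of "min \<delta>1 \<delta>2 > 0"] ballI impI)
    show "min \<delta>1 \<delta>2 > 0" using \<delta>1 \<delta>2 by simp
    fix u assume u: "u \<in> carrier_vec n" and close: "vnorm (u - y) < min \<delta>1 \<delta>2"
    obtain \<tau> where \<tau>: "\<tau> permutes {..<n}" "P u = pmat n \<tau>" using P u perm_matrix_pmat by blast
    have same: "P u *\<^sub>v y = P y *\<^sub>v y" using stable u close P \<tau> \<sigma>(2) by auto
    have "vnorm (u - y) < \<delta>1" using close by simp
    note local = affine[rule_format, OF u this]
    have "pmat n \<tau> *\<^sub>v y = pmat n \<sigma> *\<^sub>v y" using same \<sigma>(2) \<tau>(2) by simp
    with local[OF \<sigma>(1) refl] local[OF \<tau>(1)] same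
    show "P u *\<^sub>v y = P y *\<^sub>v y \<and>
      (\<forall>M\<in>{P y, P u}. KD n (M *\<^sub>v u - c) \<subseteq> KD n (P y *\<^sub>v y - c)
        \<and> (\<forall>K\<in>KD n (M *\<^sub>v u - c). projD n (M *\<^sub>v u - c) = projD n (P y *\<^sub>v y - c) + QK n K *\<^sub>v (M *\<^sub>v (u - y))))"
      unfolding \<sigma>(2) \<tau>(2) by simp
  qed
qed

theorem proposition2p8:
  fixes n :: nat and \<rho> :: real and y :: "real vec" and P :: "real vec \<Rightarrow> real mat"
  assumes P: "\<forall>u \<in> carrier_vec n. perm_matrix n (P u) \<and> P u *\<^sub>v u \<in> Dset n"
    and rho: "\<rho> > 0"
    and y: "y \<in> carrier_vec n"
  shows "\<exists>\<epsilon> > 0. \<forall>u \<in> carrier_vec n. vnorm (u - y) < \<epsilon> \<longrightarrow>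
     KD n (P y *\<^sub>v u - \<rho> \<cdot>\<^sub>v wvec n) \<subseteq> KD n (P y *\<^sub>v y - \<rho> \<cdot>\<^sub>v wvec n)
   \<and> QD n (P y *\<^sub>v u - \<rho> \<cdot>\<^sub>v wvec n) \<subseteq> QD n (P y *\<^sub>v y - \<rho> \<cdot>\<^sub>v wvec n)
   \<and> QS n \<rho> P u \<subseteq> QS n \<rho> P y
   \<and> (\<forall>Qh \<in> QD n (P y *\<^sub>v u - \<rho> \<cdot>\<^sub>v wvec n).
        projD n (P y *\<^sub>v u - \<rho> \<cdot>\<^sub>v wvec n)
          = projD n (P y *\<^sub>v y - \<rho> \<cdot>\<^sub>v wvec n) + Qh *\<^sub>v (P y *\<^sub>v (u - y)))
   \<and> (\<forall>Q \<in> QS n \<rho> P u. Srho n \<rho> u = Srho n \<rho> y + Q *\<^sub>v (u - y))"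
proof -
  let ?w = "\<rho> \<cdot>\<^sub>v wvec n"
  obtain \<epsilon> where \<epsilon>: "\<epsilon> > 0" and local: "\<forall>u\<in>carrier_vec n. vnorm (u - y) < \<epsilon> \<longrightarrow> P u *\<^sub>v y = P y *\<^sub>v y \<and>
      (\<forall>M\<in>{P y, P u}. KD n (M *\<^sub>v u - ?w) \<subseteq> KD n (P y *\<^sub>v y - ?w)
        \<and> (\<forall>K\<in>KD n (M *\<^sub>v u - ?w). projD n (M *\<^sub>v u - ?w) = projD n (P y *\<^sub>v y - ?w) + QK n K *\<^sub>v (M *\<^sub>v (u - y))))"
    using sorting_perms_projD_locally_affine[OF P y, of ?w] by auto
  show ?thesis
  proof (intro exI[of _ \<epsilon>] conjI ballI impI)
    fix u assume u: "u \<in> carrier_vec n" and "vnorm (u - y) < \<epsilon>"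
    let ?v = "P y *\<^sub>v y - ?w" and ?vy = "P y *\<^sub>v u - ?w" and ?vu = "P u *\<^sub>v u - ?w"
    have same: "P u *\<^sub>v y = P y *\<^sub>v y"
      and at_Py: "KD n ?vy \<subseteq> KD n ?v" "\<forall>K\<in>KD n ?vy. projD n ?vy = projD n ?v + QK n K *\<^sub>v (P y *\<^sub>v (u - y))"
      and at_Pu: "KD n ?vu \<subseteq> KD n ?v" "\<forall>K\<in>KD n ?vu. projD n ?vu = projD n ?v + QK n K *\<^sub>v (P u *\<^sub>v (u - y))"
      using local u \<open>vnorm (u - y) < \<epsilon>\<close> by auto
    note QS = QS_subset_and_Srho_affine[OF P rho y u same at_Pu]
    show "KD n ?vy \<subseteq> KD n ?v" by (rule at_Py(1))
    then show "QD n ?vy \<subseteq> QD n ?v" unfolding QD_eq by blast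
    show "projD n ?vy = projD n ?v + Qh *\<^sub>v (P y *\<^sub>v (u - y))" if "Qh \<in> QD n ?vy" for Qh
      using at_Py(2) that unfolding QD_eq by blast
    show "QS n \<rho> P u \<subseteq> QS n \<rho> P y" using QS by blast
    show "Srho n \<rho> u = Srho n \<rho> y + Q *\<^sub>v (u - y)" if "Q \<in> QS n \<rho> P u" for Q
      using QS that by blast
  qed (rule \<epsilon>)
qed

end
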